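(* Let $\mathcal{X},\mathcal{Y},\mathcal{U},\mathcal{Z}$ be finite sets, $(X,Y)$ with joint distribution $P_{X,Y}$ on $\mathcal{X}\times\mathcal{Y}$ ($P_X,P_Y$ full support), $f:\mathcal{X}\times\mathcal{Y}\to\mathcal{U}$, $g:\mathcal{Y}\to\mathcal{Z}$, and assume that for all $z\in\mathcal{Z}$ and $x,x'\in\mathcal{X}$ there is $y$ with $g(y)=z$ and $P_{X,Y}(x,y)P_{X,Y}(x',y)>0$. Let $(X^n,Y^n)$ be $n$ i.i.d. copies of $(X,Y)$ and $Z^n=(g(Y_t))_{t\le n}$. Then, as $n\to\infty$, $$\inf_{c\in\mathcal{S}_n}H\big(c(X^n,Z^n)\big)=n\sum_{z\in\mathcal{Z}}P_{g(Y)}(z)H_\kappa(G^f_z)+o(n).$$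
   Context: A probabilistic graph is $(\mathcal{V},\mathcal{E},P_V)$ with a distribution on vertices; a set of vertices is independent if no two are adjacent; a coloring is a map to a finite set such that adjacent vertices get different colors. The characteristic graph $G_{[n]}$ has vertex set $\mathcal{X}^n\times\mathcal{Z}^n$ with the distribution of $(X^n,Z^n)$, and $(x^n,z^n)$, $(x'^n,z'^n)$ are adjacent iff $z^n=z'^n$ and there is $y^n$ with $g(y_t)=z_t$ for all $t$ such that $P_{X,Y}(x_t,y_t)P_{X,Y}(x'_t,y_t)>0$ for all $t\le n$ and $f(x_t,y_t)\ne f(x'_t,y_t)$ for some $t$. $T_{z^n}$ denotes the type (empirical distribution) of $z^n$, and $\mathcal{S}_n$ is the set of colorings of $G_{[n]}$ of the form $(x^n,z^n)\mapsto(T_{z^n},\tilde c(x^n,z^n))$ for some map $\tilde c$ into a finite set. For $z\in\mathcal{Z}$, $G^f_z$ has vertex set $\mathcal{X}$ with distribution $P_{X|g(Y)=z}$, and $x,x'$ adjacent iff some $y$ with $g(y)=z$, $P_{X,Y}(x,y)>0$, $P_{X,Y}(x',y)>0$ has $f(x,y)\ne f(x',y)$. The Körner graph entropy of $G$ is $H_\kappa(G)=\min I(W;V)$ with $V\sim P_V$, the minimum over conditional distributions $P_{W|V}$ of $W$ taking values in the collection of independent sets of $G$ such that $V\in W$ almost surely. *)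

theory Defs
  imports Complex_Main "HOL-Library.Landau_Symbols"
begin

definition is_joint_pmf :: "('x::finite \<Rightarrow> 'y::finite \<Rightarrow> real) \<Rightarrow> bool" where
  "is_joint_pmf P \<longleftrightarrow> (\<forall>x y. P x y \<ge> 0) \<and> (\<Sum>x\<in>UNIV. \<Sum>y\<in>UNIV. P x y) = 1"

definition entropy_of :: "('c \<Rightarrow> real) \<Rightarrow> 'c set \<Rightarrow> real" where
  "entropy_of p S = - (\<Sum>v\<in>S. p v * log 2 (p v))"


definition PXZ :: "('x::finite \<Rightarrow> 'y::finite \<Rightarrow> real) \<Rightarrow> ('y \<Rightarrow> 'z) \<Rightarrow> 'x list \<Rightarrow> 'z list \<Rightarrow> real" where
  "PXZ P g xs zs = (\<Sum>ys\<in>{ys. length ys = length xs \<and> map g ys = zs}.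
                        \<Prod>t<length xs. P (xs ! t) (ys ! t))"

definition verts :: "nat \<Rightarrow> ('x list \<times> 'z list) set" where
  "verts n = {(xs, zs). length xs = n \<and> length zs = n}"

definition char_adj :: "('x \<Rightarrow> 'y \<Rightarrow> real) \<Rightarrow> ('x \<Rightarrow> 'y \<Rightarrow> 'u) \<Rightarrow> ('y \<Rightarrow> 'z) \<Rightarrow> nat
     \<Rightarrow> ('x list \<times> 'z list) \<Rightarrow> ('x list \<times> 'z list) \<Rightarrow> bool" where
  "char_adj P f g n v w \<longleftrightarrow> (case v of (xs, zs) \<Rightarrow> case w of (xs', zs') \<Rightarrow>
     zs = zs' \<and> (\<exists>ys. length ys = n \<and> (\<forall>t<n. g (ys ! t) = zs ! t) \<and>
        (\<forall>t<n. P (xs ! t) (ys ! t) * P (xs' ! t) (ys ! t) > 0) \<and>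
        (\<exists>t<n. f (xs ! t) (ys ! t) \<noteq> f (xs' ! t) (ys ! t))))"

definition seq_type :: "'z list \<Rightarrow> 'z \<Rightarrow> real" where
  "seq_type zs = (\<lambda>a. real (card {t. t < length zs \<and> zs ! t = a}) / real (length zs))"

text \<open>A coloring of G_[n] in the class S_n: (x^n,z^n) \<mapsto> (T_{z^n}, ct(x^n,z^n)),
  where ct takes values in nat (its image on the finite vertex set is finite).\<close>
definition Sn_coloring :: "('x \<Rightarrow> 'y \<Rightarrow> real) \<Rightarrow> ('x \<Rightarrow> 'y \<Rightarrow> 'u) \<Rightarrow> ('y \<Rightarrow> 'z) \<Rightarrow> nat
     \<Rightarrow> ('x list \<Rightarrow> 'z list \<Rightarrow> nat) \<Rightarrow> bool" where
  "Sn_coloring P f g n ct \<longleftrightarrow>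
     (\<forall>v\<in>verts n. \<forall>w\<in>verts n. char_adj P f g n v w \<longrightarrow>
        (seq_type (snd v), ct (fst v) (snd v)) \<noteq> (seq_type (snd w), ct (fst w) (snd w)))"

definition coloring_entropy :: "('x::finite \<Rightarrow> 'y::finite \<Rightarrow> real) \<Rightarrow> ('y \<Rightarrow> 'z::finite) \<Rightarrow> nat
     \<Rightarrow> ('x list \<Rightarrow> 'z list \<Rightarrow> nat) \<Rightarrow> real" where
  "coloring_entropy P g n ct =
     (let c = (\<lambda>(xs, zs). (seq_type zs, ct xs zs)) in
      entropy_of (\<lambda>col. \<Sum>v\<in>{v\<in>verts n. c v = col}. PXZ P g (fst v) (snd v)) (c ` verts n))"

definition indep_set :: "('a \<Rightarrow> 'a \<Rightarrow> bool) \<Rightarrow> 'a set \<Rightarrow> bool" where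
  "indep_set adj W \<longleftrightarrow> (\<forall>v\<in>W. \<forall>w\<in>W. \<not> adj v w)"

definition mutual_info :: "('a::finite \<Rightarrow> real) \<Rightarrow> ('a \<Rightarrow> 'a set \<Rightarrow> real) \<Rightarrow> real" where
  "mutual_info q Q = (\<Sum>v\<in>UNIV. \<Sum>W\<in>UNIV. q v * Q v W *
        log 2 (Q v W / (\<Sum>v'\<in>UNIV. q v' * Q v' W)))"

definition admissible_cond :: "('a::finite \<Rightarrow> 'a \<Rightarrow> bool) \<Rightarrow> ('a \<Rightarrow> 'a set \<Rightarrow> real) \<Rightarrow> bool" where
  "admissible_cond adj Q \<longleftrightarrow>
     (\<forall>v W. Q v W \<ge> 0) \<and> (\<forall>v. (\<Sum>W\<in>UNIV. Q v W) = 1) \<and>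
     (\<forall>v W. Q v W > 0 \<longrightarrow> v \<in> W \<and> indep_set adj W)"

definition korner_entropy :: "('a::finite \<Rightarrow> 'a \<Rightarrow> bool) \<Rightarrow> ('a \<Rightarrow> real) \<Rightarrow> real" where
  "korner_entropy adj q = Inf {mutual_info q Q | Q. admissible_cond adj Q}"

definition PgY :: "('x::finite \<Rightarrow> 'y::finite \<Rightarrow> real) \<Rightarrow> ('y \<Rightarrow> 'z) \<Rightarrow> 'z \<Rightarrow> real" where
  "PgY P g z = (\<Sum>x\<in>UNIV. \<Sum>y\<in>{y. g y = z}. P x y)"

definition Gz_adj :: "('x \<Rightarrow> 'y \<Rightarrow> real) \<Rightarrow> ('x \<Rightarrow> 'y \<Rightarrow> 'u) \<Rightarrow> ('y \<Rightarrow> 'z) \<Rightarrow> 'z \<Rightarrow> 'x \<Rightarrow> 'x \<Rightarrow> bool" where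
  "Gz_adj P f g z x x' \<longleftrightarrow> (\<exists>y. g y = z \<and> P x y > 0 \<and> P x' y > 0 \<and> f x y \<noteq> f x' y)"

definition Gz_dist :: "('x::finite \<Rightarrow> 'y::finite \<Rightarrow> real) \<Rightarrow> ('y \<Rightarrow> 'z) \<Rightarrow> 'z \<Rightarrow> 'x \<Rightarrow> real" where
  "Gz_dist P g z x = (\<Sum>y\<in>{y. g y = z}. P x y) / PgY P g z"

end

theory Submission
  imports Defs "HOL-Library.Nat_Bijection" "HOL-Library.FuncSet"
begin

text \<open>
  Lower bound. Let \<open>c\<close> be a coloring in \<open>S\<^sub>n\<close>. At each position \<open>t\<close>, the letters \<open>x'\<^sub>t\<close> of all
  sequences \<open>x'\<^sup>n\<close> that get the color of \<open>(X\<^sup>n, Z\<^sup>n)\<close> together with side information \<open>Z\<^sup>n\<close> form a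
  set \<open>W\<^sub>t\<close> that is independent in \<open>G\<^sup>f\<^sub>Z\<^sub>t\<close>: by the common-support hypothesis an edge at
  position \<open>t\<close> extends to an edge of \<open>G\<^sub>[\<^sub>n\<^sub>]\<close>. So \<open>X\<^sub>t \<mapsto> W\<^sub>t\<close> is an admissible test channel
  and \<open>I(X\<^sub>t; W\<^sub>t | Z\<^sub>t) \<ge> \<Sum>\<^sub>z P(z) H\<^sub>\<kappa>(G\<^sup>f\<^sub>z)\<close>, while Gibbs' inequality against a
  suitable product measure gives \<open>H(c) \<ge> \<Sum>\<^sub>t I(X\<^sub>t; W\<^sub>t | Z\<^sub>t)\<close>.

  Upper bound. Fix nearly optimal test channels \<open>Q\<^sub>z\<close>; let \<open>p\<^sub>z(x)\<close> be the probability that the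
  independent set they output contains \<open>x\<close>, so that \<open>E[-log p\<^sub>Z(X)] \<le> \<Sum>\<^sub>z P(z) I(Q\<^sub>z)\<close>.
  Sort the sequences by the level \<open>j = \<lfloor>-\<Sum>\<^sub>t log p\<^sub>z\<^sub>t(x\<^sub>t)\<rfloor>\<close>. A fractional-cover argument
  (Lovasz's greedy bound) covers each level set by \<open>2\<^sup>j\<^sup>+\<^sup>1(1 + n ln |X|)\<close> products of
  independent sets, and coloring \<open>(x\<^sup>n, z\<^sup>n)\<close> by the type of \<open>z\<^sup>n\<close>, the level and the index of
  a covering product is proper, with entropy at most the expected level plus \<open>O(log n)\<close>.
\<close>

section \<open>Sums of products over sequences\<close>

lemma finite_lists_length_Collect: "finite {xs::'a::finite list. length xs = n \<and> R xs}"
  by (rule finite_subset[OF _ finite_lists_length_eq[of "UNIV::'a set" n]]) auto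

lemma finite_lists_length: "finite {xs::'a::finite list. length xs = n}"
  using finite_lists_length_Collect[of n "\<lambda>_. True"] by simp

lemma sum_prod_nth_lists:
  fixes h :: "nat \<Rightarrow> 'a \<Rightarrow> 'b::comm_semiring_1"
  shows "(\<Sum>xs\<in>{xs. length xs = n \<and> (\<forall>t<n. xs!t \<in> A t)}. \<Prod>t<n. h t (xs!t))
        = (\<Prod>t<n. \<Sum>a\<in>A t. h t a)"
proof (induction n arbitrary: h A)
  case 0
  have "{xs::'a list. length xs = 0 \<and> (\<forall>t<0. xs!t \<in> A t)} = {[]}" by auto
  then show ?case by simp
next
  case (Suc n)
  let ?S = "{xs. length xs = n \<and> (\<forall>t<n. xs!t \<in> A (Suc t))}"
  have split: "{xs. length xs = Suc n \<and> (\<forall>t<Suc n. xs!t \<in> A t)} = (\<lambda>(a,xs). a#xs) ` (A 0 \<times> ?S)"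
  proof (intro set_eqI iffI)
    fix ys assume "ys \<in> {xs. length xs = Suc n \<and> (\<forall>t<Suc n. xs!t \<in> A t)}"
    then show "ys \<in> (\<lambda>(a,xs). a#xs) ` (A 0 \<times> ?S)"
      by (cases ys) (auto simp: image_iff)
  qed (auto simp: less_Suc_eq_0_disj)
  have inj: "inj_on (\<lambda>(a,xs). a#xs) (A 0 \<times> ?S)" by (auto simp: inj_on_def)
  have "(\<Sum>xs\<in>{xs. length xs = Suc n \<and> (\<forall>t<Suc n. xs!t \<in> A t)}. \<Prod>t<Suc n. h t (xs!t))
      = (\<Sum>a\<in>A 0. \<Sum>xs\<in>?S. h 0 a * (\<Prod>t<n. h (Suc t) (xs!t)))"
    unfolding split sum.reindex[OF inj] sum.cartesian_product
    by (simp del: prod.lessThan_Suc add: prod.lessThan_Suc_shift case_prod_unfold)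
  also have "\<dots> = (\<Sum>a\<in>A 0. h 0 a) * (\<Sum>xs\<in>?S. \<Prod>t<n. h (Suc t) (xs!t))"
    by (simp add: sum_product)
  also have "\<dots> = (\<Sum>a\<in>A 0. h 0 a) * (\<Prod>t<n. \<Sum>a\<in>A (Suc t). h (Suc t) a)"
    by (simp add: Suc.IH[of "\<lambda>t. h (Suc t)" "\<lambda>t. A (Suc t)"])
  also have "\<dots> = (\<Prod>t<Suc n. \<Sum>a\<in>A t. h t a)"
    by (simp only: prod.lessThan_Suc_shift)
  finally show ?case .
qed

lemma sum_prod_nth_lists_UNIV:
  fixes h :: "nat \<Rightarrow> 'a \<Rightarrow> 'b::comm_semiring_1"
  shows "(\<Sum>xs\<in>{xs. length xs = n}. \<Prod>t<n. h t (xs!t)) = (\<Prod>t<n. \<Sum>a\<in>UNIV. h t a)"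
  using sum_prod_nth_lists[where A="\<lambda>_. UNIV" and h=h] by simp

lemma sum_UNIV_pair: "(\<Sum>p\<in>UNIV. h p) = (\<Sum>a\<in>UNIV. \<Sum>b\<in>UNIV. h (a, b))"
  by (simp only: UNIV_Times_UNIV[symmetric] sum.cartesian_product')

lemma finite_verts: "finite (verts n :: ('x::finite list \<times> 'z::finite list) set)"
proof -
  have "verts n = {xs::'x list. length xs = n} \<times> {zs::'z list. length zs = n}"
    by (auto simp: verts_def)
  then show ?thesis by (simp add: finite_lists_length)
qed

lemma sum_prod_nth_verts:
  fixes h :: "nat \<Rightarrow> 'x \<Rightarrow> 'z \<Rightarrow> real"
  shows "(\<Sum>v\<in>{v\<in>verts n. \<forall>t<n. (fst v!t, snd v!t) \<in> A t}. \<Prod>t<n. h t (fst v!t) (snd v!t))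
       = (\<Prod>t<n. \<Sum>p\<in>A t. h t (fst p) (snd p))"
proof -
  let ?L = "{ps::('x \<times> 'z) list. length ps = n \<and> (\<forall>t<n. ps!t \<in> A t)}"
  let ?unzip = "\<lambda>ps::('x \<times> 'z) list. (map fst ps, map snd ps)"
  have inj: "inj_on ?unzip ?L"
  proof (rule inj_onI)
    fix ps ps' assume "?unzip ps = ?unzip ps'"
    then have "zip (map fst ps) (map snd ps) = zip (map fst ps') (map snd ps')" by simp
    then show "ps = ps'" by (simp only: zip_map_fst_snd)
  qed
  have img: "?unzip ` ?L = {v\<in>verts n. \<forall>t<n. (fst v!t, snd v!t) \<in> A t}"
  proof (intro set_eqI iffI)
    fix v assume v: "v \<in> {v\<in>verts n. \<forall>t<n. (fst v!t, snd v!t) \<in> A t}"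
    obtain xs zs where v_eq: "v = (xs, zs)" by (cases v)
    have "length xs = n" "length zs = n" using v v_eq by (auto simp: verts_def)
    then have "zip xs zs \<in> ?L" and "v = ?unzip (zip xs zs)" using v v_eq by auto
    then show "v \<in> ?unzip ` ?L" by (rule rev_image_eqI)
  qed (auto simp: verts_def)
  have "(\<Sum>v\<in>{v\<in>verts n. \<forall>t<n. (fst v!t, snd v!t) \<in> A t}. \<Prod>t<n. h t (fst v!t) (snd v!t))
      = (\<Sum>ps\<in>?L. \<Prod>t<n. h t (fst (ps!t)) (snd (ps!t)))"
    unfolding img[symmetric] sum.reindex[OF inj] comp_def
    by (intro sum.cong refl prod.cong) simp_all
  also have "\<dots> = (\<Prod>t<n. \<Sum>p\<in>A t. h t (fst p) (snd p))"
    by (rule sum_prod_nth_lists)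
  finally show ?thesis .
qed

section \<open>Information inequalities\<close>

lemma log_prod: "finite I \<Longrightarrow> (\<And>i. i \<in> I \<Longrightarrow> h i \<noteq> 0) \<Longrightarrow> log b (prod h I) = (\<Sum>i\<in>I. log b (h i))"
  unfolding log_def by (simp add: ln_prod sum_divide_distrib)

lemma gibbs_inequality:
  fixes p q :: "'a \<Rightarrow> real"
  assumes "finite S" "\<And>i. i \<in> S \<Longrightarrow> p i > 0" "\<And>i. i \<in> S \<Longrightarrow> q i > 0" "sum q S \<le> sum p S"
  shows "(\<Sum>i\<in>S. p i * log 2 (p i / q i)) \<ge> 0"
proof -
  have "p i * log 2 (q i / p i) \<le> (q i - p i) / ln 2" if "i \<in> S" for i
  proof -
    have p: "p i > 0" and q: "q i > 0" using assms that by auto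
    have "p i * ln (q i / p i) \<le> p i * (q i / p i - 1)"
      using p q by (intro mult_left_mono ln_le_minus_one) auto
    also have "\<dots> = q i - p i" using p by (simp add: field_simps)
    finally show ?thesis by (simp add: log_def divide_right_mono)
  qed
  then have "(\<Sum>i\<in>S. p i * log 2 (q i / p i)) \<le> (\<Sum>i\<in>S. (q i - p i) / ln 2)"
    by (rule sum_mono)
  also have "\<dots> = (sum q S - sum p S) / ln 2"
    by (simp add: sum_divide_distrib[symmetric] sum_subtractf)
  also have "\<dots> \<le> 0" using assms(4) by (simp add: divide_nonpos_pos)
  finally have "(\<Sum>i\<in>S. p i * log 2 (q i / p i)) \<le> 0" .
  moreover have "p i * log 2 (p i / q i) = - (p i * log 2 (q i / p i))" if "i \<in> S" for i
    using assms(2,3)[OF that] by (simp add: log_divide_pos algebra_simps)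
  ultimately show ?thesis by (simp add: sum_negf)
qed

lemma gibbs_inequality_nonneg:
  fixes p q :: "'a \<Rightarrow> real"
  assumes "finite S" "\<And>i. i \<in> S \<Longrightarrow> p i \<ge> 0" "\<And>i. i \<in> S \<Longrightarrow> q i \<ge> 0"
    and "\<And>i. i \<in> S \<Longrightarrow> p i > 0 \<Longrightarrow> q i > 0" "sum q S \<le> sum p S"
  shows "(\<Sum>i\<in>S. p i * log 2 (p i / q i)) \<ge> 0"
proof -
  let ?T = "{i\<in>S. p i > 0}"
  have "sum q ?T \<le> sum q S" using assms(1,3) by (intro sum_mono2) auto
  also have "\<dots> \<le> sum p S" by (rule assms(5))
  also have "\<dots> = sum p ?T" using assms(1,2) by (intro sum.mono_neutral_right) (auto simp: order_less_le)
  finally have "0 \<le> (\<Sum>i\<in>?T. p i * log 2 (p i / q i))"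
    using assms(1,4) by (intro gibbs_inequality) auto
  also have "\<dots> = (\<Sum>i\<in>S. p i * log 2 (p i / q i))"
    using assms(1,2) by (intro sum.mono_neutral_left) (auto simp: order_less_le)
  finally show ?thesis .
qed

lemma log_sum_inequality:
  fixes p q :: "'a \<Rightarrow> real"
  assumes "finite S" "\<And>i. i \<in> S \<Longrightarrow> p i > 0" "\<And>i. i \<in> S \<Longrightarrow> q i > 0" "sum p S = 1"
  shows "- log 2 (sum q S) \<le> (\<Sum>i\<in>S. p i * log 2 (p i / q i))"
proof -
  have "S \<noteq> {}" using assms(4) by auto
  then have Q: "sum q S > 0" using assms(1,3) by (intro sum_pos) auto
  have "0 \<le> (\<Sum>i\<in>S. p i * log 2 (p i / (q i / sum q S)))"
    using assms Q by (intro gibbs_inequality) (auto simp: sum_divide_distrib[symmetric])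
  also have "\<dots> = (\<Sum>i\<in>S. p i * log 2 (p i / q i) + p i * log 2 (sum q S))"
    using assms(2,3) Q by (intro sum.cong refl) (simp add: log_divide_pos log_mult_pos algebra_simps)
  also have "\<dots> = (\<Sum>i\<in>S. p i * log 2 (p i / q i)) + (\<Sum>i\<in>S. p i) * log 2 (sum q S)"
    by (simp add: sum.distrib sum_distrib_right)
  finally show ?thesis using assms(4) by simp
qed

lemma mutual_info_nonneg:
  fixes q :: "'a::finite \<Rightarrow> real"
  assumes q_nonneg: "\<And>v. q v \<ge> 0" and q_sum: "sum q UNIV = 1"
    and Q_nonneg: "\<And>v W. Q v W \<ge> 0" and Q_sum: "\<And>v. (\<Sum>W\<in>UNIV. Q v W) = 1"
  shows "mutual_info q Q \<ge> 0"
proof -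
  let ?r = "\<lambda>W. \<Sum>v'\<in>UNIV. q v' * Q v' W"
  let ?J = "\<lambda>p. q (fst p) * Q (fst p) (snd p)"
  let ?K = "\<lambda>p. q (fst p) * ?r (snd p)"
  have r_ge: "?r (snd p) \<ge> ?J p" for p
    by (rule member_le_sum) (simp_all add: q_nonneg Q_nonneg)
  have "mutual_info q Q = (\<Sum>p\<in>UNIV. ?J p * log 2 (Q (fst p) (snd p) / ?r (snd p)))"
    unfolding mutual_info_def by (simp add: sum_UNIV_pair)
  also have "\<dots> = (\<Sum>p\<in>UNIV. ?J p * log 2 (?J p / ?K p))"
    by (intro sum.cong refl) (auto simp: mult.commute[of "q _"])
  also have "\<dots> \<ge> 0"
  proof (rule gibbs_inequality_nonneg)
    show "0 < ?K p" if "0 < ?J p" for p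
    proof -
      have "0 < ?r (snd p)" using that r_ge[of p] by linarith
      then show ?thesis using that q_nonneg[of "fst p"] by (auto simp: zero_less_mult_iff)
    qed
    have "(\<Sum>W\<in>UNIV. ?r W) = 1"
      using q_sum Q_sum by (subst sum.swap) (simp add: sum_distrib_left[symmetric])
    then show "sum ?K UNIV \<le> sum ?J UNIV"
      using q_sum Q_sum by (simp add: sum_UNIV_pair sum_distrib_left[symmetric])
  qed (auto intro!: mult_nonneg_nonneg sum_nonneg simp: q_nonneg Q_nonneg)
  finally show ?thesis .
qed

lemma korner_entropy_le_mutual_info:
  fixes q :: "'a::finite \<Rightarrow> real"
  assumes "\<And>v. q v \<ge> 0" "sum q UNIV = 1" and "admissible_cond adj Q"
  shows "korner_entropy adj q \<le> mutual_info q Q"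
  unfolding korner_entropy_def
proof (rule cInf_lower)
  show "mutual_info q Q \<in> {mutual_info q Q |Q. admissible_cond adj Q}" using assms(3) by blast
  show "bdd_below {mutual_info q Q |Q. admissible_cond adj Q}"
    by (rule bdd_belowI[of _ 0])
      (use assms(1,2) in \<open>auto simp: admissible_cond_def intro!: mutual_info_nonneg\<close>)
qed

lemma korner_entropy_approx:
  assumes "\<And>v. \<not> adj v v" and "\<epsilon> > 0"
  obtains Q where "admissible_cond adj Q" "mutual_info q Q < korner_entropy adj q + \<epsilon>"
proof -
  let ?S = "{mutual_info q Q |Q. admissible_cond adj Q}"
  have "admissible_cond adj (\<lambda>x W. if W = {x} then 1 else 0)"
    unfolding admissible_cond_def indep_set_def using assms(1) by (simp add: sum.delta)
  then have ne: "?S \<noteq> {}" by blast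
  have "Inf ?S < korner_entropy adj q + \<epsilon>"
    unfolding korner_entropy_def using assms(2) by simp
  then obtain m where "m \<in> ?S" "m < korner_entropy adj q + \<epsilon>"
    using cInf_lessD[OF ne] by blast
  then show ?thesis using that by blast
qed

section \<open>Greedy covering\<close>

lemma fractional_cover_heavy_member:
  fixes w :: "'b \<Rightarrow> real" and mem :: "'b \<Rightarrow> 'a set"
  assumes "finite F" "\<And>S. S \<in> F \<Longrightarrow> w S \<ge> 0" "sum w F \<le> T"
    and "finite U" "U \<noteq> {}" "\<And>u. u \<in> U \<Longrightarrow> (\<Sum>S\<in>{S\<in>F. u \<in> mem S}. w S) \<ge> 1"
  obtains S where "S \<in> F" "real (card U) \<le> T * real (card (U \<inter> mem S))"
proof -
  have "F \<noteq> {}" using assms(5,6) by fastforce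
  define M where "M = Max ((\<lambda>S. card (U \<inter> mem S)) ` F)"
  have "M \<in> (\<lambda>S. card (U \<inter> mem S)) ` F"
    unfolding M_def using assms(1) \<open>F \<noteq> {}\<close> by (intro Max_in) auto
  then obtain S where S: "S \<in> F" "card (U \<inter> mem S) = M" by blast
  have card_eq: "real (card (U \<inter> mem S')) = (\<Sum>u\<in>U. if u \<in> mem S' then 1 else 0)" for S'
    using assms(4) by (simp add: sum.If_cases Int_def)
  have "real (card U) = (\<Sum>u\<in>U. 1)" by simp
  also have "\<dots> \<le> (\<Sum>u\<in>U. \<Sum>S'\<in>{S'\<in>F. u \<in> mem S'}. w S')"
    using assms(6) by (rule sum_mono)
  also have "\<dots> = (\<Sum>S'\<in>F. w S' * real (card (U \<inter> mem S')))"
    unfolding card_eq using assms(1)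
    by (simp add: sum_distrib_left sum.inter_filter if_distrib cong: if_cong) (rule sum.swap)
  also have "\<dots> \<le> (\<Sum>S'\<in>F. w S' * real M)"
    unfolding M_def using assms(1,2) by (intro sum_mono mult_left_mono) auto
  also have "\<dots> \<le> T * real M"
    using assms(3) by (simp add: sum_distrib_right[symmetric] mult_right_mono)
  finally show ?thesis using that S by simp
qed

text \<open>Lovasz's greedy bound: each greedy choice removes at least a \<open>1/T\<close> fraction of the
  uncovered points, which lowers \<open>T (1 + ln |U|)\<close> by at least one.\<close>

lemma greedy_log_step:
  fixes T u m :: real
  assumes "u \<le> T * m" "0 < u - m" "0 < u" "T > 0"
  shows "T * (1 + ln (u - m)) \<le> T * (1 + ln u) - 1"
proof -
  have "T * (u - m) \<le> T * u - u" using assms(1) by (simp add: right_diff_distrib)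
  then have shrink: "u - m \<le> u * (1 - 1/T)" using assms(4) by (simp add: field_simps)
  then have "0 < u * (1 - 1/T)" using assms(2) by linarith
  then have pos: "0 < 1 - 1/T" using assms(3) by (simp add: zero_less_mult_iff)
  have "ln (u - m) \<le> ln (u * (1 - 1/T))" using shrink assms(2) by (intro ln_mono) auto
  also have "\<dots> = ln u + ln (1 - 1/T)" using assms(3) pos by (intro ln_mult_pos) auto
  also have "ln (1 - 1/T) \<le> - 1/T" using ln_le_minus_one[OF pos] by simp
  finally show ?thesis using assms(4) by (simp add: field_simps)
qed

lemma fractional_cover_greedy:
  fixes w :: "'b \<Rightarrow> real" and mem :: "'b \<Rightarrow> 'a set"
  assumes F: "finite F" "\<And>S. S \<in> F \<Longrightarrow> w S \<ge> 0" "sum w F \<le> T"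
  shows "finite U \<Longrightarrow> U \<noteq> {} \<Longrightarrow> (\<And>u. u \<in> U \<Longrightarrow> (\<Sum>S\<in>{S\<in>F. u \<in> mem S}. w S) \<ge> 1) \<Longrightarrow>
     \<exists>L. set L \<subseteq> F \<and> U \<subseteq> (\<Union>S\<in>set L. mem S) \<and> real (length L) \<le> T * (1 + ln (real (card U)))"
proof (induction "card U" arbitrary: U rule: less_induct)
  case less
  obtain S where S: "S \<in> F" and heavy: "real (card U) \<le> T * real (card (U \<inter> mem S))"
    using fractional_cover_heavy_member[OF F less.prems] .
  define M where "M = card (U \<inter> mem S)"
  have cU: "card U > 0" using less.prems(1,2) by (simp add: card_gt_0_iff)
  have M_le: "M \<le> card U" unfolding M_def using less.prems(1) by (intro card_mono) auto
  have "0 < T * real M" using heavy cU unfolding M_def by linarith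
  then have "T > 0" and M_pos: "M > 0" by (auto simp: zero_less_mult_iff)
  show ?case
  proof (cases "U \<subseteq> mem S")
    case True
    have "real (card U) \<le> T * real (card U)"
      using heavy M_le \<open>T > 0\<close> unfolding M_def[symmetric] by (meson mult_left_mono of_nat_mono order.trans less_imp_le)
    then have "1 * 1 \<le> T * (1 + ln (real (card U)))"
      using cU by (intro mult_mono) auto
    then show ?thesis using S True by (intro exI[of _ "[S]"]) auto
  next
    case False
    define U' where "U' = U - mem S"
    have U': "finite U'" "U' \<noteq> {}" using less.prems(1) False unfolding U'_def by auto
    have card_U': "real (card U') = real (card U) - real M"
      unfolding U'_def M_def using less.prems(1) M_le
      by (simp add: card_Diff_subset_Int of_nat_diff M_def)
    then have "card U' < card U" using M_pos by linarith
    then obtain L' where L': "set L' \<subseteq> F" "U' \<subseteq> (\<Union>S\<in>set L'. mem S)"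
      "real (length L') \<le> T * (1 + ln (real (card U')))"
      using less.hyps U' less.prems(3) unfolding U'_def by blast
    have "real (card U') > 0" using U' by (simp add: card_gt_0_iff)
    then have "T * (1 + ln (real (card U'))) \<le> T * (1 + ln (real (card U))) - 1"
      unfolding card_U' using heavy cU \<open>T > 0\<close> by (intro greedy_log_step) (auto simp: M_def)
    then have "real (length (S # L')) \<le> T * (1 + ln (real (card U)))" using L'(3) by simp
    moreover have "U \<subseteq> (\<Union>S'\<in>set (S # L'). mem S')" using L'(2) unfolding U'_def by auto
    ultimately show ?thesis using L'(1) S by (intro exI[of _ "S # L'"]) auto
  qed
qed

section \<open>Counting and growth estimates\<close>

lemma card_seq_type_image_le:
  "card (seq_type ` {zs::'z::finite list. length zs = n}) \<le> (n + 1) ^ card (UNIV::'z set)"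
proof -
  let ?H = "PiE (UNIV::'z set) (\<lambda>_. {..n})"
  let ?F = "\<lambda>h::'z \<Rightarrow> nat. \<lambda>a. real (h a) / real n"
  have "seq_type ` {zs::'z list. length zs = n} \<subseteq> ?F ` ?H"
  proof
    fix T assume "T \<in> seq_type ` {zs::'z list. length zs = n}"
    then obtain zs where zs: "length zs = n" "T = seq_type zs" by blast
    let ?h = "\<lambda>a. card {t. t < length zs \<and> zs ! t = a}"
    have "?h a \<le> n" for a
      using card_mono[of "{..<n}" "{t. t < length zs \<and> zs ! t = a}"] zs(1) by auto
    then have "?h \<in> ?H" by (simp add: PiE_UNIV_domain)
    moreover have "T = ?F ?h" using zs unfolding seq_type_def by simp
    ultimately show "T \<in> ?F ` ?H" using image_eqI[where f="?F" and x="?h"] by blast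
  qed
  then have "card (seq_type ` {zs::'z list. length zs = n}) \<le> card (?F ` ?H)"
    by (rule card_mono[rotated]) (simp add: finite_PiE)
  also have "\<dots> \<le> card ?H" by (rule card_image_le) (simp add: finite_PiE)
  also have "\<dots> = (n + 1) ^ card (UNIV::'z set)" by (simp add: card_PiE)
  finally show ?thesis .
qed

lemma sum_inverse_consecutive_products:
  "(\<Sum>j\<le>J. 1 / (real (j + 1) * real (j + 2))) = 1 - 1 / real (J + 2)"
proof (induction J)
  case (Suc J)
  have "1 / (real (Suc J + 1) * real (Suc J + 2)) = 1 / real (J + 2) - 1 / real (Suc J + 2)"
    by (simp add: field_simps)
  then show ?case using Suc.IH by simp
qed simp

lemma eventually_const_le_linear:
  fixes C e :: real
  assumes "e > 0"
  shows "eventually (\<lambda>n::nat. C \<le> e * real n) sequentially"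
  using eventually_ge_at_top[of "nat \<lceil>C / e\<rceil>"]
proof (rule eventually_mono)
  fix n :: nat assume "n \<ge> nat \<lceil>C / e\<rceil>"
  then have "real n \<ge> C / e" by linarith
  then show "C \<le> e * real n" using assms by (simp add: divide_le_eq mult.commute)
qed

lemma eventually_log_le_linear:
  fixes e :: real
  assumes "e > 0"
  shows "eventually (\<lambda>n::nat. log 2 (real n + 1) \<le> e * real n) sequentially"
proof -
  define d where "d = e * ln 2 / 2"
  have "d > 0" unfolding d_def using assms by simp
  have "((\<lambda>n::nat. ln (1 + real n) / (1 + real n)) \<longlongrightarrow> 0) sequentially"
    by (rule filterlim_compose[OF ln_x_over_x_tendsto_0])
      (rule filterlim_tendsto_add_at_top[OF tendsto_const filterlim_real_sequentially])
  from order_tendstoD(2)[OF this \<open>d > 0\<close>]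
  have "eventually (\<lambda>n::nat. ln (1 + real n) / (1 + real n) < d \<and> n \<ge> 1) sequentially"
    by (rule eventually_conj) (rule eventually_ge_at_top)
  then show ?thesis
  proof (rule eventually_mono)
    fix n :: nat assume n: "ln (1 + real n) / (1 + real n) < d \<and> n \<ge> 1"
    then have "ln (1 + real n) < d * (1 + real n)" by (simp add: divide_less_eq)
    also have "\<dots> \<le> d * (2 * real n)" using n \<open>d > 0\<close> by (intro mult_left_mono) auto
    finally have "ln (real n + 1) \<le> (e * real n) * ln 2" unfolding d_def by (simp add: add.commute mult_ac)
    then show "log 2 (real n + 1) \<le> e * real n" by (simp add: log_def divide_le_eq)
  qed
qed

lemma log_affine_le:
  fixes a b :: real
  assumes "a \<ge> 0" "b > 0"
  shows "log 2 (b + real n * a) \<le> log 2 (b + a) + log 2 (real n + 1)"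
proof -
  have "log 2 (b + real n * a) \<le> log 2 ((b + a) * (real n + 1))"
    using assms by (intro log_mono) (auto simp: algebra_simps add_pos_nonneg)
  also have "\<dots> = log 2 (b + a) + log 2 (real n + 1)"
    using assms by (intro log_mult_pos) auto
  finally show ?thesis .
qed

section \<open>The distribution of \<open>(X\<^sup>n, Z\<^sup>n)\<close>\<close>

type_synonym ('x, 'z) vertex = "'x list \<times> 'z list"
type_synonym ('z, 'x) test_channels = "'z \<Rightarrow> 'x \<Rightarrow> 'x set \<Rightarrow> real"

definition Sn_color :: "('x list \<Rightarrow> 'z list \<Rightarrow> nat) \<Rightarrow> ('x, 'z) vertex \<Rightarrow> ('z \<Rightarrow> real) \<times> nat" where
  "Sn_color ct v = (seq_type (snd v), ct (fst v) (snd v))"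

text \<open>The hypothesis \<open>common_support\<close> makes every \<open>P\<^sub>X\<^sub>,\<^sub>g\<^sub>(\<^sub>Y\<^sub>)(x,z)\<close> positive, and it lets an edge
  of \<open>G\<^sup>f\<^sub>z\<close> in one coordinate be completed to an edge of \<open>G\<^sub>[\<^sub>n\<^sub>]\<close>.\<close>

locale char_graph =
  fixes P :: "'x::finite \<Rightarrow> 'y::finite \<Rightarrow> real" and f :: "'x \<Rightarrow> 'y \<Rightarrow> 'u"
    and g :: "'y \<Rightarrow> 'z::finite"
  assumes joint_pmf: "is_joint_pmf P"
    and common_support: "\<And>z x x'. \<exists>y. g y = z \<and> P x y * P x' y > 0"
begin

definition pxz :: "'x \<Rightarrow> 'z \<Rightarrow> real" where
  "pxz x z = (\<Sum>y\<in>{y. g y = z}. P x y)"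

abbreviation vprob :: "('x, 'z) vertex \<Rightarrow> real" where
  "vprob v \<equiv> PXZ P g (fst v) (snd v)"

lemma P_nonneg: "P x y \<ge> 0"
  using joint_pmf by (simp add: is_joint_pmf_def)

lemma pxz_pos: "pxz x z > 0"
proof -
  obtain y where "g y = z" "P x y * P x y > 0" using common_support by blast
  then have "g y = z" "P x y > 0" using P_nonneg[of x y] by (auto simp: zero_less_mult_iff)
  then show ?thesis unfolding pxz_def by (intro sum_pos2[of _ y]) (auto simp: P_nonneg)
qed

lemma sum_pxz: "(\<Sum>p\<in>UNIV. pxz (fst p) (snd p)) = 1"
proof -
  have "(\<Sum>z\<in>UNIV. pxz x z) = (\<Sum>y\<in>UNIV. P x y)" for x
    unfolding pxz_def using sum.group[of "UNIV::'y set" "UNIV::'z set" g "P x"] by simp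
  then show ?thesis
    using joint_pmf by (simp add: sum_UNIV_pair is_joint_pmf_def)
qed

lemma PgY_eq: "PgY P g z = (\<Sum>x\<in>UNIV. pxz x z)"
  by (simp add: PgY_def pxz_def)

lemma PgY_pos: "PgY P g z > 0"
  unfolding PgY_eq by (rule sum_pos2[of _ undefined]) (auto simp: pxz_pos less_imp_le)

lemma sum_PgY: "(\<Sum>z\<in>UNIV. PgY P g z) = 1"
  using sum_pxz unfolding PgY_eq sum_UNIV_pair by (subst sum.swap) simp

lemma Gz_dist_eq: "Gz_dist P g z x = pxz x z / PgY P g z"
  by (simp add: Gz_dist_def pxz_def)

lemma Gz_dist_pos: "Gz_dist P g z x > 0"
  by (simp add: Gz_dist_eq pxz_pos PgY_pos)

lemma sum_Gz_dist: "(\<Sum>x\<in>UNIV. Gz_dist P g z x) = 1"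
  using PgY_pos[of z] by (simp add: Gz_dist_eq sum_divide_distrib[symmetric] PgY_eq[symmetric])

lemma Gz_adj_irrefl: "\<not> Gz_adj P f g z x x"
  by (simp add: Gz_adj_def)

lemma vprob_eq_prod:
  assumes "v \<in> verts n"
  shows "vprob v = (\<Prod>t<n. pxz (fst v!t) (snd v!t))"
proof -
  obtain xs zs where v: "v = (xs, zs)" "length xs = n" "length zs = n"
    using assms by (cases v) (auto simp: verts_def)
  have "{ys. length ys = length xs \<and> map g ys = zs} = {ys. length ys = n \<and> (\<forall>t<n. ys!t \<in> {y. g y = zs!t})}"
    using v by (auto simp: list_eq_iff_nth_eq)
  then show ?thesis
    using v sum_prod_nth_lists[where h="\<lambda>t y. P (xs!t) y" and A="\<lambda>t. {y. g y = zs!t}" and n=n]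
    by (simp add: PXZ_def pxz_def)
qed

lemma vprob_pos: "v \<in> verts n \<Longrightarrow> vprob v > 0"
  by (simp add: vprob_eq_prod pxz_pos prod_pos)

lemma vprob_nonneg: "vprob v \<ge> 0"
  unfolding PXZ_def by (intro sum_nonneg prod_nonneg) (simp add: P_nonneg)

lemma sum_vprob_coordinate:
  assumes "s < n"
  shows "(\<Sum>v\<in>{v\<in>verts n. fst v!s = x \<and> snd v!s = z}. vprob v) = pxz x z"
proof -
  let ?A = "\<lambda>t. if t = s then {(x,z)} else UNIV"
  have "{v\<in>verts n. fst v!s = x \<and> snd v!s = z} = {v\<in>verts n. \<forall>t<n. (fst v!t, snd v!t) \<in> ?A t}"
    using assms by auto
  then have "(\<Sum>v\<in>{v\<in>verts n. fst v!s = x \<and> snd v!s = z}. vprob v)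
      = (\<Sum>v\<in>{v\<in>verts n. \<forall>t<n. (fst v!t, snd v!t) \<in> ?A t}. \<Prod>t<n. pxz (fst v!t) (snd v!t))"
    by (simp only:) (rule sum.cong[OF refl], simp add: vprob_eq_prod)
  also have "\<dots> = (\<Prod>t<n. \<Sum>p\<in>?A t. pxz (fst p) (snd p))"
    by (rule sum_prod_nth_verts)
  also have "\<dots> = (\<Prod>t<n. if t = s then pxz x z else 1)"
    by (rule prod.cong) (simp_all add: sum_pxz)
  also have "\<dots> = pxz x z" using assms by (simp add: prod.delta)
  finally show ?thesis .
qed

lemma sum_vprob: "(\<Sum>v\<in>verts n. vprob v) = 1"
  using sum_prod_nth_verts[where n=n and A="\<lambda>_. UNIV" and h="\<lambda>t x z. pxz x z"]
  by (simp add: vprob_eq_prod sum_pxz cong: sum.cong)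

lemma sum_vprob_times_coordinate_function:
  assumes "s < n"
  shows "(\<Sum>v\<in>verts n. vprob v * \<phi> (fst v!s) (snd v!s)) = (\<Sum>z\<in>UNIV. \<Sum>x\<in>UNIV. pxz x z * \<phi> x z)"
proof -
  have "(\<Sum>v\<in>verts n. vprob v * \<phi> (fst v!s) (snd v!s))
      = (\<Sum>p\<in>UNIV. \<Sum>v\<in>{v\<in>verts n. (fst v!s, snd v!s) = p}. vprob v * \<phi> (fst v!s) (snd v!s))"
    by (rule sum.group[symmetric]) (auto simp: finite_verts)
  also have "\<dots> = (\<Sum>p\<in>UNIV. pxz (fst p) (snd p) * \<phi> (fst p) (snd p))"
  proof (rule sum.cong[OF refl])
    fix p :: "'x \<times> 'z"
    have "(\<Sum>v\<in>{v\<in>verts n. (fst v!s, snd v!s) = p}. vprob v * \<phi> (fst v!s) (snd v!s))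
        = (\<Sum>v\<in>{v\<in>verts n. fst v!s = fst p \<and> snd v!s = snd p}. vprob v) * \<phi> (fst p) (snd p)"
      unfolding sum_distrib_right by (intro sum.cong) auto
    then show "(\<Sum>v\<in>{v\<in>verts n. (fst v!s, snd v!s) = p}. vprob v * \<phi> (fst v!s) (snd v!s))
        = pxz (fst p) (snd p) * \<phi> (fst p) (snd p)"
      by (simp add: sum_vprob_coordinate[OF assms])
  qed
  also have "\<dots> = (\<Sum>z\<in>UNIV. \<Sum>x\<in>UNIV. pxz x z * \<phi> x z)"
    unfolding sum_UNIV_pair by (simp add: sum.swap[of _ "UNIV::'x set"])
  finally show ?thesis .
qed

section \<open>Lower bound\<close>

text \<open>\<open>slice_of n c t v\<close> is the set \<open>W\<^sub>t\<close> of the proof sketch above, and \<open>joint_xwz\<close> is the joint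
  law of \<open>(X\<^sub>t, W\<^sub>t, Z\<^sub>t)\<close>.\<close>

definition color_slice :: "nat \<Rightarrow> (('x, 'z) vertex \<Rightarrow> 'c) \<Rightarrow> nat \<Rightarrow> 'c \<Rightarrow> 'z list \<Rightarrow> 'x set" where
  "color_slice n c t col zs = {xs'!t | xs'. length xs' = n \<and> c (xs', zs) = col}"

abbreviation slice_of :: "nat \<Rightarrow> (('x, 'z) vertex \<Rightarrow> 'c) \<Rightarrow> nat \<Rightarrow> ('x, 'z) vertex \<Rightarrow> 'x set" where
  "slice_of n c t v \<equiv> color_slice n c t (c v) (snd v)"

definition joint_xwz :: "nat \<Rightarrow> (('x, 'z) vertex \<Rightarrow> 'c) \<Rightarrow> nat \<Rightarrow> 'x \<Rightarrow> 'x set \<Rightarrow> 'z \<Rightarrow> real" where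
  "joint_xwz n c t x W z = (\<Sum>v\<in>{v\<in>verts n. fst v!t = x \<and> slice_of n c t v = W \<and> snd v!t = z}. vprob v)"

definition joint_wz :: "nat \<Rightarrow> (('x, 'z) vertex \<Rightarrow> 'c) \<Rightarrow> nat \<Rightarrow> 'x set \<Rightarrow> 'z \<Rightarrow> real" where
  "joint_wz n c t W z = (\<Sum>v\<in>{v\<in>verts n. slice_of n c t v = W \<and> snd v!t = z}. vprob v)"

definition color_prob :: "nat \<Rightarrow> (('x, 'z) vertex \<Rightarrow> 'c) \<Rightarrow> 'c \<Rightarrow> real" where
  "color_prob n c col = (\<Sum>v\<in>{v\<in>verts n. c v = col}. vprob v)"

lemma joint_xwz_nonneg: "joint_xwz n c t x W z \<ge> 0"
  unfolding joint_xwz_def by (rule sum_nonneg) (simp add: vprob_nonneg)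

lemma joint_wz_nonneg: "joint_wz n c t W z \<ge> 0"
  unfolding joint_wz_def by (rule sum_nonneg) (simp add: vprob_nonneg)

lemma joint_xwz_pos: "v \<in> verts n \<Longrightarrow> joint_xwz n c t (fst v!t) (slice_of n c t v) (snd v!t) > 0"
  unfolding joint_xwz_def by (rule sum_pos2[of _ v]) (auto simp: finite_verts vprob_pos vprob_nonneg)

lemma joint_wz_pos: "v \<in> verts n \<Longrightarrow> joint_wz n c t (slice_of n c t v) (snd v!t) > 0"
  unfolding joint_wz_def by (rule sum_pos2[of _ v]) (auto simp: finite_verts vprob_pos vprob_nonneg)

lemma color_prob_pos: "v \<in> verts n \<Longrightarrow> color_prob n c (c v) > 0"
  unfolding color_prob_def by (rule sum_pos2[of _ v]) (auto simp: finite_verts vprob_pos vprob_nonneg)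

lemma sum_joint_xwz_source: "(\<Sum>x\<in>UNIV. joint_xwz n c t x W z) = joint_wz n c t W z"
  unfolding joint_xwz_def joint_wz_def
  using sum.group[of "{v\<in>verts n. slice_of n c t v = W \<and> snd v!t = z}" UNIV "\<lambda>v. fst v!t" vprob]
  by (simp add: finite_verts conj_ac)

lemma sum_joint_xwz_slice: "t < n \<Longrightarrow> (\<Sum>W\<in>UNIV. joint_xwz n c t x W z) = pxz x z"
  unfolding joint_xwz_def
  using sum.group[of "{v\<in>verts n. fst v!t = x \<and> snd v!t = z}" UNIV "slice_of n c t" vprob]
    sum_vprob_coordinate[of t n x z]
  by (simp add: finite_verts conj_ac)

lemma sum_color_prob: "(\<Sum>col\<in>c ` verts n. color_prob n c col) = 1"
  unfolding color_prob_def using sum.group[of "verts n" "c ` verts n" c vprob] sum_vprob[of n]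
  by (simp add: finite_verts)

lemma sum_color_prob_times:
  "(\<Sum>col\<in>c ` verts n. color_prob n c col * h col) = (\<Sum>v\<in>verts n. vprob v * h (c v))"
proof -
  have "(\<Sum>col\<in>c ` verts n. color_prob n c col * h col)
      = (\<Sum>col\<in>c ` verts n. \<Sum>v\<in>{v\<in>verts n. c v = col}. vprob v * h (c v))"
    unfolding color_prob_def by (intro sum.cong refl) (simp add: sum_distrib_right)
  also have "\<dots> = (\<Sum>v\<in>verts n. vprob v * h (c v))"
    by (rule sum.group) (auto simp: finite_verts)
  finally show ?thesis .
qed

lemma entropy_color_prob:
  "entropy_of (color_prob n c) (c ` verts n) = - (\<Sum>v\<in>verts n. vprob v * log 2 (color_prob n c (c v)))"
  unfolding entropy_of_def using sum_color_prob_times[where h="\<lambda>col. log 2 (color_prob n c col)"]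
  by simp

text \<open>A sub-probability on vertices: draw the color from its law, then, independently for each
  position, \<open>z\<^sub>t\<close> from \<open>P\<^sub>g\<^sub>(\<^sub>Y\<^sub>)\<close> and \<open>x\<^sub>t\<close> from the law of \<open>X\<^sub>t\<close> given \<open>(W\<^sub>t, Z\<^sub>t)\<close>.
  Comparing it with the law of \<open>(X\<^sup>n, Z\<^sup>n)\<close> by Gibbs' inequality gives
  \<open>H(c) \<ge> \<Sum>\<^sub>t I(X\<^sub>t; W\<^sub>t | Z\<^sub>t)\<close>.\<close>

definition aux_density :: "nat \<Rightarrow> (('x, 'z) vertex \<Rightarrow> 'c) \<Rightarrow> 'c \<Rightarrow> ('x, 'z) vertex \<Rightarrow> real" where
  "aux_density n c col v = (\<Prod>t<n.
     PgY P g (snd v!t) * joint_xwz n c t (fst v!t) (color_slice n c t col (snd v)) (snd v!t)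
       / joint_wz n c t (color_slice n c t col (snd v)) (snd v!t))"

definition aux_measure :: "nat \<Rightarrow> (('x, 'z) vertex \<Rightarrow> 'c) \<Rightarrow> ('x, 'z) vertex \<Rightarrow> real" where
  "aux_measure n c v = color_prob n c (c v) * aux_density n c (c v) v"

definition info_density :: "nat \<Rightarrow> (('x, 'z) vertex \<Rightarrow> 'c) \<Rightarrow> nat \<Rightarrow> ('x, 'z) vertex \<Rightarrow> real" where
  "info_density n c t v = log 2 (joint_xwz n c t (fst v!t) (slice_of n c t v) (snd v!t)
       / (Gz_dist P g (snd v!t) (fst v!t) * joint_wz n c t (slice_of n c t v) (snd v!t)))"

lemma aux_density_nonneg: "aux_density n c col v \<ge> 0"
  unfolding aux_density_def using PgY_pos
  by (intro prod_nonneg divide_nonneg_nonneg mult_nonneg_nonneg joint_xwz_nonneg joint_wz_nonneg)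
    (auto simp: less_imp_le)

lemma sum_aux_density_fibre:
  assumes "(xs0, zs) \<in> verts n" "c (xs0, zs) = col"
  shows "(\<Sum>xs\<in>{xs. length xs = n}. aux_density n c col (xs, zs)) = (\<Prod>t<n. PgY P g (zs!t))"
proof -
  let ?W = "\<lambda>t. color_slice n c t col zs"
  have "(\<Sum>xs\<in>{xs. length xs = n}. aux_density n c col (xs, zs))
      = (\<Prod>t<n. \<Sum>x\<in>UNIV. PgY P g (zs!t) * joint_xwz n c t x (?W t) (zs!t) / joint_wz n c t (?W t) (zs!t))"
    unfolding aux_density_def
    using sum_prod_nth_lists_UNIV[where h="\<lambda>t x. PgY P g (zs!t) * joint_xwz n c t x (?W t) (zs!t)
        / joint_wz n c t (?W t) (zs!t)"] by simp
  also have "\<dots> = (\<Prod>t<n. PgY P g (zs!t))"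
  proof (rule prod.cong[OF refl])
    fix t
    have "joint_wz n c t (?W t) (zs!t) > 0" using joint_wz_pos[OF assms(1), of c t] assms(2) by simp
    then show "(\<Sum>x\<in>UNIV. PgY P g (zs!t) * joint_xwz n c t x (?W t) (zs!t) / joint_wz n c t (?W t) (zs!t))
        = PgY P g (zs!t)"
      by (simp add: sum_distrib_left[symmetric] sum_divide_distrib[symmetric] sum_joint_xwz_source)
  qed
  finally show ?thesis .
qed

lemma sum_aux_density_color_class: "(\<Sum>v\<in>{v\<in>verts n. c v = col}. aux_density n c col v) \<le> 1"
proof -
  define Zc where "Zc = {zs::'z list. length zs = n \<and> (\<exists>xs. length xs = n \<and> c (xs, zs) = col)}"
  have "finite Zc" unfolding Zc_def by (rule finite_lists_length_Collect)
  have "(\<Sum>v\<in>{v\<in>verts n. c v = col}. aux_density n c col v)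
      \<le> (\<Sum>v\<in>{xs::'x list. length xs = n} \<times> Zc. aux_density n c col v)"
    by (rule sum_mono2) (auto simp: Zc_def verts_def finite_lists_length \<open>finite Zc\<close> aux_density_nonneg)
  also have "\<dots> = (\<Sum>zs\<in>Zc. \<Sum>xs\<in>{xs::'x list. length xs = n}. aux_density n c col (xs, zs))"
    by (simp only: sum.cartesian_product') (rule sum.swap)
  also have "\<dots> = (\<Sum>zs\<in>Zc. \<Prod>t<n. PgY P g (zs!t))"
    by (intro sum.cong refl) (auto simp: Zc_def verts_def intro!: sum_aux_density_fibre)
  also have "\<dots> \<le> (\<Sum>zs\<in>{zs::'z list. length zs = n}. \<Prod>t<n. PgY P g (zs!t))"
    by (rule sum_mono2) (auto simp: finite_lists_length Zc_def PgY_pos less_imp_le intro!: prod_nonneg)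
  also have "\<dots> = 1"
    using sum_prod_nth_lists_UNIV[where h="\<lambda>t z. PgY P g z" and n=n] by (simp add: sum_PgY)
  finally show ?thesis .
qed

lemma sum_aux_measure: "(\<Sum>v\<in>verts n. aux_measure n c v) \<le> 1"
proof -
  have "(\<Sum>v\<in>verts n. aux_measure n c v)
      = (\<Sum>col\<in>c ` verts n. \<Sum>v\<in>{v\<in>verts n. c v = col}. aux_measure n c v)"
    by (rule sum.group[symmetric]) (auto simp: finite_verts)
  also have "\<dots> = (\<Sum>col\<in>c ` verts n. color_prob n c col * (\<Sum>v\<in>{v\<in>verts n. c v = col}. aux_density n c col v))"
    unfolding aux_measure_def by (intro sum.cong refl) (simp add: sum_distrib_left)
  also have "\<dots> \<le> (\<Sum>col\<in>c ` verts n. color_prob n c col * 1)"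
    by (intro sum_mono mult_left_mono sum_aux_density_color_class) (auto simp: less_imp_le color_prob_pos)
  also have "\<dots> = 1" using sum_color_prob by simp
  finally show ?thesis .
qed

lemma aux_measure_pos: "v \<in> verts n \<Longrightarrow> aux_measure n c v > 0"
  unfolding aux_measure_def aux_density_def
  by (intro mult_pos_pos color_prob_pos prod_pos ballI divide_pos_pos PgY_pos joint_xwz_pos joint_wz_pos)

lemma log_vprob_div_aux_measure:
  assumes v: "v \<in> verts n"
  shows "log 2 (vprob v / aux_measure n c v) = - log 2 (color_prob n c (c v)) - (\<Sum>t<n. info_density n c t v)"
proof -
  let ?x = "\<lambda>t. fst v!t" and ?z = "\<lambda>t. snd v!t" and ?W = "\<lambda>t. slice_of n c t v"
  let ?k = "\<lambda>t. PgY P g (?z t) * joint_xwz n c t (?x t) (?W t) (?z t) / joint_wz n c t (?W t) (?z t)"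
  have k_pos: "?k t > 0" for t
    using joint_xwz_pos[OF v] joint_wz_pos[OF v] PgY_pos by (intro divide_pos_pos mult_pos_pos)
  have "log 2 (\<Prod>t<n. ?k t) = (\<Sum>t<n. log 2 (?k t))"
  proof (rule log_prod)
    show "?k t \<noteq> 0" for t using k_pos[of t] by linarith
  qed simp
  moreover have "aux_measure n c v = color_prob n c (c v) * (\<Prod>t<n. ?k t)"
    unfolding aux_measure_def aux_density_def by simp
  ultimately have "log 2 (aux_measure n c v) = log 2 (color_prob n c (c v)) + (\<Sum>t<n. log 2 (?k t))"
    using color_prob_pos[OF v, of c] k_pos by (simp add: log_mult_pos prod_pos)
  moreover have "log 2 (vprob v) = (\<Sum>t<n. log 2 (pxz (?x t) (?z t)))"
    unfolding vprob_eq_prod[OF v] by (rule log_prod) (auto simp: pxz_pos less_imp_neq[symmetric])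
  moreover have "info_density n c t v = log 2 (?k t) - log 2 (pxz (?x t) (?z t))" for t
  proof -
    have "info_density n c t v = log 2 (?k t / pxz (?x t) (?z t))"
      unfolding info_density_def using PgY_pos[of "?z t"] pxz_pos[of "?x t" "?z t"]
      by (simp add: Gz_dist_eq field_simps)
    then show ?thesis by (simp only: log_divide_pos[OF k_pos[of t] pxz_pos])
  qed
  ultimately show ?thesis
    using vprob_pos[OF v] aux_measure_pos[OF v, of c] by (simp add: log_divide_pos sum_subtractf)
qed

lemma entropy_ge_sum_info_density:
  "entropy_of (color_prob n c) (c ` verts n) \<ge> (\<Sum>t<n. \<Sum>v\<in>verts n. vprob v * info_density n c t v)"
proof -
  have "0 \<le> (\<Sum>v\<in>verts n. vprob v * log 2 (vprob v / aux_measure n c v))"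
    using sum_aux_measure[of n c] sum_vprob[of n]
    by (intro gibbs_inequality) (auto simp: finite_verts vprob_pos aux_measure_pos)
  also have "\<dots> = (\<Sum>v\<in>verts n. - (vprob v * log 2 (color_prob n c (c v))))
      - (\<Sum>v\<in>verts n. \<Sum>t<n. vprob v * info_density n c t v)"
    by (simp add: log_vprob_div_aux_measure sum_subtractf[symmetric] algebra_simps sum_distrib_left
        cong: sum.cong)
  also have "\<dots> = entropy_of (color_prob n c) (c ` verts n) - (\<Sum>t<n. \<Sum>v\<in>verts n. vprob v * info_density n c t v)"
    by (simp add: entropy_color_prob sum_negf sum.swap[of _ "verts n"])
  finally show ?thesis by simp
qed

lemma char_adj_of_Gz_adj:
  assumes "t < n" and adj: "Gz_adj P f g (zs!t) (xs!t) (xs'!t)"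
  shows "char_adj P f g n (xs, zs) (xs', zs)"
proof -
  obtain y0 where y0: "g y0 = zs!t" "P (xs!t) y0 > 0" "P (xs'!t) y0 > 0" "f (xs!t) y0 \<noteq> f (xs'!t) y0"
    using adj unfolding Gz_adj_def by blast
  define ys where "ys = map (\<lambda>s. if s = t then y0
      else (SOME y. g y = zs!s \<and> P (xs!s) y * P (xs'!s) y > 0)) [0..<n]"
  have "length ys = n" unfolding ys_def by simp
  moreover have "g (ys!s) = zs!s \<and> P (xs!s) (ys!s) * P (xs'!s) (ys!s) > 0" if "s < n" for s
  proof (cases "s = t")
    case False
    then show ?thesis
      using that someI_ex[OF common_support[of "zs!s" "xs!s" "xs'!s"]] unfolding ys_def by simp
  qed (use that y0 in \<open>simp add: ys_def\<close>)
  moreover have "f (xs!t) (ys!t) \<noteq> f (xs'!t) (ys!t)" using y0 \<open>t < n\<close> unfolding ys_def by simp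
  ultimately show ?thesis
    unfolding char_adj_def using \<open>t < n\<close> by auto
qed

lemma Gz_adj_of_char_adj:
  assumes "char_adj P f g n (xs, zs) (xs', zs')"
  shows "zs' = zs \<and> (\<exists>t<n. Gz_adj P f g (zs!t) (xs!t) (xs'!t))"
proof -
  obtain ys t where "zs' = zs" and ys: "\<forall>t<n. g (ys!t) = zs!t"
    "\<forall>t<n. P (xs!t) (ys!t) * P (xs'!t) (ys!t) > 0" and t: "t < n" "f (xs!t) (ys!t) \<noteq> f (xs'!t) (ys!t)"
    using assms unfolding char_adj_def by auto
  moreover have "P (xs!t) (ys!t) > 0" "P (xs'!t) (ys!t) > 0"
    using ys(2) t(1) P_nonneg[of "xs!t" "ys!t"] P_nonneg[of "xs'!t" "ys!t"]
    by (auto simp: zero_less_mult_iff)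
  ultimately show ?thesis unfolding Gz_adj_def using ys(1) t by blast
qed

definition slice_channel :: "nat \<Rightarrow> (('x, 'z) vertex \<Rightarrow> 'c) \<Rightarrow> nat \<Rightarrow> 'z \<Rightarrow> 'x \<Rightarrow> 'x set \<Rightarrow> real" where
  "slice_channel n c t z x W = joint_xwz n c t x W z / pxz x z"

lemma color_slice_indep:
  assumes proper: "\<forall>v\<in>verts n. \<forall>w\<in>verts n. char_adj P f g n v w \<longrightarrow> c v \<noteq> c w"
    and "t < n" "length zs = n"
  shows "indep_set (Gz_adj P f g (zs!t)) (color_slice n c t col zs)"
  unfolding indep_set_def
proof (intro ballI notI)
  fix a b assume "a \<in> color_slice n c t col zs" "b \<in> color_slice n c t col zs"
    and ab: "Gz_adj P f g (zs!t) a b"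
  then obtain xs xs' where xs: "a = xs!t" "length xs = n" "c (xs, zs) = col"
    and xs': "b = xs'!t" "length xs' = n" "c (xs', zs) = col"
    unfolding color_slice_def by blast
  have "char_adj P f g n (xs, zs) (xs', zs)"
    using char_adj_of_Gz_adj[OF assms(2), of zs xs xs'] xs(1) xs'(1) ab by simp
  moreover have "(xs, zs) \<in> verts n" "(xs', zs) \<in> verts n" using xs xs' assms(3) by (auto simp: verts_def)
  ultimately show False using proper xs(3) xs'(3) by metis
qed

lemma slice_channel_admissible:
  assumes proper: "\<forall>v\<in>verts n. \<forall>w\<in>verts n. char_adj P f g n v w \<longrightarrow> c v \<noteq> c w" and "t < n"
  shows "admissible_cond (Gz_adj P f g z) (slice_channel n c t z)"
  unfolding admissible_cond_def
proof (intro conjI allI impI)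
  show "slice_channel n c t z x W \<ge> 0" for x W
    unfolding slice_channel_def using pxz_pos[of x z] joint_xwz_nonneg[of n c t x W z] by simp
  show "(\<Sum>W\<in>UNIV. slice_channel n c t z x W) = 1" for x
    unfolding slice_channel_def using pxz_pos[of x z] sum_joint_xwz_slice[OF \<open>t < n\<close>, of c x z]
    by (simp add: sum_divide_distrib[symmetric])
  fix x W assume "slice_channel n c t z x W > 0"
  then have "joint_xwz n c t x W z \<noteq> 0" unfolding slice_channel_def by auto
  then have "{v\<in>verts n. fst v!t = x \<and> slice_of n c t v = W \<and> snd v!t = z} \<noteq> {}"
    unfolding joint_xwz_def by (metis sum.empty)
  then obtain v where v: "v \<in> verts n" "fst v!t = x" "slice_of n c t v = W" "snd v!t = z"
    by blast
  then have len: "length (fst v) = n" "length (snd v) = n" by (auto simp: verts_def)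
  show "x \<in> W" using v len unfolding color_slice_def by (cases v) auto
  show "indep_set (Gz_adj P f g z) W"
    using color_slice_indep[OF proper \<open>t < n\<close> len(2), of "c v"] v(3,4) by simp
qed

lemma sum_vprob_times_slice_function:
  "(\<Sum>v\<in>verts n. vprob v * F (fst v!t) (slice_of n c t v) (snd v!t))
    = (\<Sum>z\<in>UNIV. \<Sum>x\<in>UNIV. \<Sum>W\<in>UNIV. joint_xwz n c t x W z * F x W z)"
proof -
  let ?key = "\<lambda>v. (fst v!t, slice_of n c t v, snd v!t)"
  have "(\<Sum>v\<in>verts n. vprob v * F (fst v!t) (slice_of n c t v) (snd v!t))
      = (\<Sum>k\<in>UNIV. \<Sum>v\<in>{v\<in>verts n. ?key v = k}. vprob v * F (fst v!t) (slice_of n c t v) (snd v!t))"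
    by (rule sum.group[symmetric]) (auto simp: finite_verts)
  also have "\<dots> = (\<Sum>k\<in>UNIV. joint_xwz n c t (fst k) (fst (snd k)) (snd (snd k)) * F (fst k) (fst (snd k)) (snd (snd k)))"
  proof (rule sum.cong[OF refl])
    fix k :: "'x \<times> 'x set \<times> 'z"
    obtain x W z where k: "k = (x, W, z)" by (cases k) auto
    have "(\<Sum>v\<in>{v\<in>verts n. ?key v = k}. vprob v * F (fst v!t) (slice_of n c t v) (snd v!t))
        = (\<Sum>v\<in>{v\<in>verts n. ?key v = k}. vprob v * F x W z)"
      by (intro sum.cong refl) (simp add: k)
    then show "(\<Sum>v\<in>{v\<in>verts n. ?key v = k}. vprob v * F (fst v!t) (slice_of n c t v) (snd v!t))
        = joint_xwz n c t (fst k) (fst (snd k)) (snd (snd k)) * F (fst k) (fst (snd k)) (snd (snd k))"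
      unfolding joint_xwz_def k by (simp add: sum_distrib_right conj_ac)
  qed
  also have "\<dots> = (\<Sum>x\<in>UNIV. \<Sum>z\<in>UNIV. \<Sum>W\<in>UNIV. joint_xwz n c t x W z * F x W z)"
    by (simp add: sum_UNIV_pair sum.swap[of _ "UNIV::'x set set"])
  also have "\<dots> = (\<Sum>z\<in>UNIV. \<Sum>x\<in>UNIV. \<Sum>W\<in>UNIV. joint_xwz n c t x W z * F x W z)"
    by (rule sum.swap)
  finally show ?thesis .
qed

lemma PgY_mutual_info_slice_channel:
  "PgY P g z * mutual_info (Gz_dist P g z) (slice_channel n c t z)
    = (\<Sum>x\<in>UNIV. \<Sum>W\<in>UNIV. joint_xwz n c t x W z
         * log 2 (joint_xwz n c t x W z / (Gz_dist P g z x * joint_wz n c t W z)))"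
proof -
  have pg: "PgY P g z > 0" by (rule PgY_pos)
  have joint: "PgY P g z * Gz_dist P g z x * slice_channel n c t z x W = joint_xwz n c t x W z" for x W
    using pxz_pos[of x z] pg by (simp add: slice_channel_def Gz_dist_eq)
  have "Gz_dist P g z x * slice_channel n c t z x W = joint_xwz n c t x W z / PgY P g z" for x W
    using joint[of x W] pg by (simp add: field_simps)
  then have out: "(\<Sum>x\<in>UNIV. Gz_dist P g z x * slice_channel n c t z x W) = joint_wz n c t W z / PgY P g z" for W
    by (simp add: sum_divide_distrib[symmetric] sum_joint_xwz_source)
  have ratio: "slice_channel n c t z x W / (joint_wz n c t W z / PgY P g z)
      = joint_xwz n c t x W z / (Gz_dist P g z x * joint_wz n c t W z)" for x W
    using pxz_pos[of x z] pg by (simp add: slice_channel_def Gz_dist_eq field_simps)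
  show ?thesis
    unfolding mutual_info_def out ratio sum_distrib_left
    by (intro sum.cong refl) (simp add: joint mult.assoc[symmetric])
qed

lemma expected_info_density:
  "(\<Sum>v\<in>verts n. vprob v * info_density n c t v)
    = (\<Sum>z\<in>UNIV. PgY P g z * mutual_info (Gz_dist P g z) (slice_channel n c t z))"
  unfolding info_density_def PgY_mutual_info_slice_channel
  by (rule sum_vprob_times_slice_function)

definition korner_rate :: real where
  "korner_rate = (\<Sum>z\<in>UNIV. PgY P g z * korner_entropy (Gz_adj P f g z) (Gz_dist P g z))"

lemma coloring_entropy_eq:
  "coloring_entropy P g n ct = entropy_of (color_prob n (Sn_color ct)) (Sn_color ct ` verts n)"
  unfolding coloring_entropy_def Let_def color_prob_def Sn_color_def by (simp add: case_prod_unfold)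

theorem coloring_entropy_ge_korner_rate:
  assumes "Sn_coloring P f g n ct"
  shows "coloring_entropy P g n ct \<ge> real n * korner_rate"
proof -
  define c where "c = Sn_color ct"
  have proper: "\<forall>v\<in>verts n. \<forall>w\<in>verts n. char_adj P f g n v w \<longrightarrow> c v \<noteq> c w"
    using assms unfolding Sn_coloring_def c_def Sn_color_def by blast
  have "real n * korner_rate = (\<Sum>t<n. korner_rate)" by simp
  also have "\<dots> \<le> (\<Sum>t<n. \<Sum>z\<in>UNIV. PgY P g z * mutual_info (Gz_dist P g z) (slice_channel n c t z))"
    unfolding korner_rate_def
    by (intro sum_mono mult_left_mono korner_entropy_le_mutual_info slice_channel_admissible[OF proper])
      (auto simp: less_imp_le Gz_dist_pos sum_Gz_dist PgY_pos)
  also have "\<dots> = (\<Sum>t<n. \<Sum>v\<in>verts n. vprob v * info_density n c t v)"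
    by (simp add: expected_info_density)
  also have "\<dots> \<le> coloring_entropy P g n ct"
    unfolding coloring_entropy_eq c_def[symmetric] by (rule entropy_ge_sum_info_density)
  finally show ?thesis .
qed

section \<open>Upper bound\<close>

definition admissible_family :: "('z, 'x) test_channels \<Rightarrow> bool" where
  "admissible_family Q \<longleftrightarrow> (\<forall>z. admissible_cond (Gz_adj P f g z) (Q z))"

definition out_prob :: "('z, 'x) test_channels \<Rightarrow> 'z \<Rightarrow> 'x set \<Rightarrow> real" where
  "out_prob Q z W = (\<Sum>x\<in>UNIV. Gz_dist P g z x * Q z x W)"

definition hit_prob :: "('z, 'x) test_channels \<Rightarrow> 'z \<Rightarrow> 'x \<Rightarrow> real" where
  "hit_prob Q z x = (\<Sum>W\<in>{W. x \<in> W}. out_prob Q z W)"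

context
  fixes Q assumes Q: "admissible_family Q"
begin

lemma Q_nonneg: "Q z x W \<ge> 0"
  using Q by (simp add: admissible_family_def admissible_cond_def)

lemma sum_Q: "(\<Sum>W\<in>UNIV. Q z x W) = 1"
  using Q by (simp add: admissible_family_def admissible_cond_def)

lemma Q_pos_imp_member_indep: "Q z x W > 0 \<Longrightarrow> x \<in> W \<and> indep_set (Gz_adj P f g z) W"
  using Q by (simp add: admissible_family_def admissible_cond_def)

lemma sum_Q_support: "(\<Sum>W\<in>{W. Q z x W > 0}. Q z x W) = 1"
  using sum_Q[of z x] by (subst sum.mono_neutral_left) (auto simp: Q_nonneg order_less_le)

lemma out_prob_nonneg: "out_prob Q z W \<ge> 0"
  unfolding out_prob_def using Gz_dist_pos by (intro sum_nonneg mult_nonneg_nonneg Q_nonneg less_imp_le)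

lemma out_prob_ge: "out_prob Q z W \<ge> Gz_dist P g z x * Q z x W"
  unfolding out_prob_def using Gz_dist_pos
  by (intro member_le_sum mult_nonneg_nonneg Q_nonneg less_imp_le) auto

lemma out_prob_pos: "Q z x W > 0 \<Longrightarrow> out_prob Q z W > 0"
  using out_prob_ge Gz_dist_pos by (meson mult_pos_pos order_less_le_trans)

lemma sum_out_prob: "(\<Sum>W\<in>UNIV. out_prob Q z W) = 1"
  unfolding out_prob_def by (subst sum.swap) (simp add: sum_distrib_left[symmetric] sum_Q sum_Gz_dist)

lemma out_prob_pos_imp_indep: "out_prob Q z W > 0 \<Longrightarrow> indep_set (Gz_adj P f g z) W"
proof -
  assume "out_prob Q z W > 0"
  then obtain x where "Q z x W \<noteq> 0" unfolding out_prob_def by (metis (no_types, lifting) mult_zero_right sum.neutral less_irrefl)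
  then show ?thesis using Q_pos_imp_member_indep Q_nonneg by (simp add: order_less_le)
qed

lemma hit_prob_le_1: "hit_prob Q z x \<le> 1"
  using sum_mono2[of UNIV "{W. x \<in> W}" "out_prob Q z"] sum_out_prob[of z]
  by (simp add: hit_prob_def out_prob_nonneg)

lemma hit_prob_ge_support: "(\<Sum>W\<in>{W. Q z x W > 0}. out_prob Q z W) \<le> hit_prob Q z x"
  unfolding hit_prob_def by (rule sum_mono2) (auto dest: Q_pos_imp_member_indep simp: out_prob_nonneg)

lemma hit_prob_pos: "hit_prob Q z x > 0"
proof -
  obtain W where "Q z x W > 0" using sum_Q_support[of z x] by fastforce
  then have "0 < (\<Sum>W\<in>{W. Q z x W > 0}. out_prob Q z W)"
    by (intro sum_pos2[of _ W]) (auto simp: out_prob_pos out_prob_nonneg)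
  then show ?thesis using hit_prob_ge_support by (meson order_less_le_trans)
qed

lemma neg_log_hit_prob_le: "- log 2 (hit_prob Q z x) \<le> (\<Sum>W\<in>UNIV. Q z x W * log 2 (Q z x W / out_prob Q z W))"
proof -
  let ?S = "{W. Q z x W > 0}"
  have "- log 2 (hit_prob Q z x) \<le> - log 2 (\<Sum>W\<in>?S. out_prob Q z W)"
    using hit_prob_ge_support[of z x] sum_Q_support[of z x]
    by (subst neg_le_iff_le, intro log_mono) (auto intro!: sum_pos simp: out_prob_pos)
  also have "\<dots> \<le> (\<Sum>W\<in>?S. Q z x W * log 2 (Q z x W / out_prob Q z W))"
    by (rule log_sum_inequality) (auto simp: out_prob_pos sum_Q_support)
  also have "\<dots> = (\<Sum>W\<in>UNIV. Q z x W * log 2 (Q z x W / out_prob Q z W))"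
    by (rule sum.mono_neutral_left) (auto simp: Q_nonneg order_less_le)
  finally show ?thesis .
qed

lemma expected_neg_log_hit_prob_le:
  "(\<Sum>x\<in>UNIV. Gz_dist P g z x * - log 2 (hit_prob Q z x)) \<le> mutual_info (Gz_dist P g z) (Q z)"
proof -
  have "(\<Sum>x\<in>UNIV. Gz_dist P g z x * - log 2 (hit_prob Q z x))
     \<le> (\<Sum>x\<in>UNIV. Gz_dist P g z x * (\<Sum>W\<in>UNIV. Q z x W * log 2 (Q z x W / out_prob Q z W)))"
    using Gz_dist_pos by (intro sum_mono mult_left_mono neg_log_hit_prob_le) (auto simp: less_imp_le)
  also have "\<dots> = mutual_info (Gz_dist P g z) (Q z)"
    unfolding mutual_info_def out_prob_def by (simp add: sum_distrib_left mult.assoc)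
  finally show ?thesis .
qed

end

text \<open>Given test channels \<open>Q\<close>, a random sequence of independent sets \<open>W\<^sub>t \<sim> out_prob Q z\<^sub>t\<close>
  contains \<open>x\<^sup>n\<close> with probability \<open>\<Prod>\<^sub>t hit_prob Q z\<^sub>t x\<^sub>t > 2 powr -(j + 1)\<close> on the level set \<open>j\<close>
  of the self-information; so this random sequence, scaled by \<open>2 ^ (j + 1)\<close>, is a fractional cover
  of the level set, and the greedy bound turns it into \<open>cover_bound n j\<close> products.\<close>

definition indep_seqs :: "('z, 'x) test_channels \<Rightarrow> nat \<Rightarrow> 'z list \<Rightarrow> 'x set list set" where
  "indep_seqs Q n zs = {Ws. length Ws = n \<and> (\<forall>t<n. Ws!t \<in> {W. out_prob Q (zs!t) W > 0})}"

definition members :: "nat \<Rightarrow> 'x set list \<Rightarrow> 'x list set" where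
  "members n Ws = {xs. length xs = n \<and> (\<forall>t<n. xs!t \<in> Ws!t)}"

definition seq_weight :: "('z, 'x) test_channels \<Rightarrow> nat \<Rightarrow> 'z list \<Rightarrow> 'x set list \<Rightarrow> real" where
  "seq_weight Q n zs Ws = (\<Prod>t<n. out_prob Q (zs!t) (Ws!t))"

definition self_info :: "('z, 'x) test_channels \<Rightarrow> nat \<Rightarrow> ('x, 'z) vertex \<Rightarrow> real" where
  "self_info Q n v = (\<Sum>t<n. - log 2 (hit_prob Q (snd v!t) (fst v!t)))"

definition level :: "('z, 'x) test_channels \<Rightarrow> nat \<Rightarrow> ('x, 'z) vertex \<Rightarrow> nat" where
  "level Q n v = nat \<lfloor>self_info Q n v\<rfloor>"

definition level_set :: "('z, 'x) test_channels \<Rightarrow> nat \<Rightarrow> 'z list \<Rightarrow> nat \<Rightarrow> 'x list set" where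
  "level_set Q n zs j = {xs. length xs = n \<and> level Q n (xs, zs) = j}"

definition cover_bound :: "nat \<Rightarrow> nat \<Rightarrow> real" where
  "cover_bound n j = 2 ^ (j + 1) * (1 + real n * ln (real (card (UNIV::'x set))))"

definition self_info_bound :: "('z, 'x) test_channels \<Rightarrow> real" where
  "self_info_bound Q = (\<Sum>z\<in>UNIV. \<Sum>x\<in>UNIV. - log 2 (hit_prob Q z x))"

lemma cover_bound_ge_2: "cover_bound n j \<ge> 2"
proof -
  have "(2::real) * 1 \<le> 2 ^ (j + 1) * (1 + real n * ln (real (card (UNIV::'x set))))"
    by (intro mult_mono) (auto simp: card_gt_0_iff Suc_le_eq)
  then show ?thesis unfolding cover_bound_def by simp
qed

lemma members_indep_seq_not_adj:
  assumes "Ws \<in> indep_seqs Q n zs" "xs \<in> members n Ws" "xs' \<in> members n Ws"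
    and "admissible_family Q"
  shows "\<not> char_adj P f g n (xs, zs) (xs', zs)"
proof
  assume "char_adj P f g n (xs, zs) (xs', zs)"
  then obtain t where t: "t < n" "Gz_adj P f g (zs!t) (xs!t) (xs'!t)"
    using Gz_adj_of_char_adj by blast
  have "indep_set (Gz_adj P f g (zs!t)) (Ws!t)"
    using assms(1) t(1) out_prob_pos_imp_indep[OF assms(4)] unfolding indep_seqs_def by simp
  moreover have "xs!t \<in> Ws!t" "xs'!t \<in> Ws!t" using assms(2,3) t(1) unfolding members_def by auto
  ultimately show False using t(2) unfolding indep_set_def by blast
qed

context
  fixes Q assumes Q: "admissible_family Q"
begin

lemma self_info_nonneg: "self_info Q n v \<ge> 0"
  unfolding self_info_def using hit_prob_pos[OF Q] hit_prob_le_1[OF Q]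
  by (intro sum_nonneg) (simp add: log_le_zero_cancel_iff)

lemma neg_log_hit_prob_le_bound: "- log 2 (hit_prob Q z x) \<le> self_info_bound Q"
proof -
  have nonneg: "log 2 (hit_prob Q z' x') \<le> 0" for z' x'
    using hit_prob_pos[OF Q] hit_prob_le_1[OF Q] by (simp add: log_le_zero_cancel_iff)
  have "- log 2 (hit_prob Q z x) \<le> (\<Sum>x\<in>UNIV. - log 2 (hit_prob Q z x))"
    by (rule member_le_sum) (simp_all add: nonneg)
  also have "\<dots> \<le> self_info_bound Q" unfolding self_info_bound_def
    by (rule member_le_sum[of z UNIV "\<lambda>z. \<Sum>x\<in>UNIV. - log 2 (hit_prob Q z x)"])
      (auto intro!: sum_nonneg simp: nonneg)
  finally show ?thesis .
qed

lemma self_info_le: "self_info Q n v \<le> real n * self_info_bound Q"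
  unfolding self_info_def using sum_mono[of "{..<n}", OF neg_log_hit_prob_le_bound] by simp

lemma level_le_self_info: "real (level Q n v) \<le> self_info Q n v"
  unfolding level_def using self_info_nonneg[of n v] by simp

lemma prod_hit_prob_level: "1 < 2 ^ (level Q n v + 1) * (\<Prod>t<n. hit_prob Q (snd v!t) (fst v!t))"
proof -
  let ?p = "\<Prod>t<n. hit_prob Q (snd v!t) (fst v!t)"
  have "?p > 0" using hit_prob_pos[OF Q] by (simp add: prod_pos)
  have "log 2 ?p = - self_info Q n v"
  proof -
    have "log 2 ?p = (\<Sum>t<n. log 2 (hit_prob Q (snd v!t) (fst v!t)))"
    proof (rule log_prod)
      show "hit_prob Q (snd v!t) (fst v!t) \<noteq> 0" for t using hit_prob_pos[OF Q] by (metis less_irrefl)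
    qed simp
    then show ?thesis unfolding self_info_def by (simp add: sum_negf)
  qed
  moreover have "?p = 2 powr (log 2 ?p)" using \<open>?p > 0\<close> by simp
  ultimately have "?p = 2 powr (- self_info Q n v)" by simp
  moreover have "self_info Q n v < real (level Q n v + 1)"
    unfolding level_def using self_info_nonneg[of n v] by linarith
  moreover have "(2::real) ^ (level Q n v + 1) = 2 powr real (level Q n v + 1)"
    by (rule powr_realpow[symmetric]) simp
  ultimately have "2 ^ (level Q n v + 1) * ?p = 2 powr (real (level Q n v + 1) - self_info Q n v)"
    by (simp add: powr_diff powr_minus divide_inverse)
  also have "\<dots> > 1" using \<open>self_info Q n v < real (level Q n v + 1)\<close> by (intro gr_one_powr) auto
  finally show ?thesis .
qed

lemma sum_seq_weight: "(\<Sum>Ws\<in>indep_seqs Q n zs. seq_weight Q n zs Ws) = 1"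
proof -
  have "(\<Sum>W\<in>{W. out_prob Q z W > 0}. out_prob Q z W) = 1" for z
    using sum_out_prob[OF Q, of z]
    by (subst sum.mono_neutral_left) (auto simp: out_prob_nonneg[OF Q] order_less_le)
  moreover have "(\<Sum>Ws\<in>indep_seqs Q n zs. seq_weight Q n zs Ws)
      = (\<Prod>t<n. \<Sum>W\<in>{W. out_prob Q (zs!t) W > 0}. out_prob Q (zs!t) W)"
    unfolding indep_seqs_def seq_weight_def by (rule sum_prod_nth_lists)
  ultimately show ?thesis by simp
qed

lemma sum_seq_weight_members:
  assumes "length xs = n"
  shows "(\<Sum>Ws\<in>{Ws\<in>indep_seqs Q n zs. xs \<in> members n Ws}. seq_weight Q n zs Ws)
       = (\<Prod>t<n. hit_prob Q (zs!t) (xs!t))"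
proof -
  have eq: "{Ws\<in>indep_seqs Q n zs. xs \<in> members n Ws}
      = {Ws. length Ws = n \<and> (\<forall>t<n. Ws!t \<in> {W. out_prob Q (zs!t) W > 0 \<and> xs!t \<in> W})}"
    unfolding indep_seqs_def members_def using assms by auto
  have "(\<Sum>Ws\<in>{Ws\<in>indep_seqs Q n zs. xs \<in> members n Ws}. seq_weight Q n zs Ws)
      = (\<Prod>t<n. \<Sum>W\<in>{W. out_prob Q (zs!t) W > 0 \<and> xs!t \<in> W}. out_prob Q (zs!t) W)"
    unfolding eq seq_weight_def by (rule sum_prod_nth_lists)
  also have "\<dots> = (\<Prod>t<n. hit_prob Q (zs!t) (xs!t))"
    unfolding hit_prob_def
    by (intro prod.cong refl sum.mono_neutral_left) (auto simp: out_prob_nonneg[OF Q] order_less_le)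
  finally show ?thesis .
qed

lemma level_cover_exists:
  "\<exists>L. set L \<subseteq> indep_seqs Q n zs \<and> level_set Q n zs j \<subseteq> (\<Union>Ws\<in>set L. members n Ws)
     \<and> real (length L) \<le> cover_bound n j"
proof (cases "level_set Q n zs j = {}")
  case True
  then show ?thesis using cover_bound_ge_2[of n j] by (intro exI[of _ "[]"]) auto
next
  case False
  let ?T = "(2::real) ^ (j + 1)"
  have fin: "finite (level_set Q n zs j)" unfolding level_set_def by (rule finite_lists_length_Collect)
  have F_fin: "finite (indep_seqs Q n zs)" unfolding indep_seqs_def by (rule finite_lists_length_Collect)
  have w_nonneg: "\<And>Ws. Ws \<in> indep_seqs Q n zs \<Longrightarrow> ?T * seq_weight Q n zs Ws \<ge> 0"
    unfolding seq_weight_def by (auto intro!: mult_nonneg_nonneg prod_nonneg simp: out_prob_nonneg[OF Q])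
  have w_sum: "(\<Sum>Ws\<in>indep_seqs Q n zs. ?T * seq_weight Q n zs Ws) \<le> ?T"
    by (simp add: sum_distrib_left[symmetric] sum_seq_weight)
  have cover: "(\<Sum>Ws\<in>{Ws\<in>indep_seqs Q n zs. xs \<in> members n Ws}. ?T * seq_weight Q n zs Ws) \<ge> 1"
    if "xs \<in> level_set Q n zs j" for xs
  proof -
    have "length xs = n" "level Q n (xs, zs) = j" using that by (auto simp: level_set_def)
    then show ?thesis
      using prod_hit_prob_level[of n "(xs, zs)"]
      by (simp add: sum_distrib_left[symmetric] sum_seq_weight_members)
  qed
  obtain L where L: "set L \<subseteq> indep_seqs Q n zs"
    "level_set Q n zs j \<subseteq> (\<Union>Ws\<in>set L. members n Ws)"
    "real (length L) \<le> ?T * (1 + ln (real (card (level_set Q n zs j))))"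
    using fractional_cover_greedy[OF F_fin w_nonneg w_sum fin False cover] by blast
  have "card (level_set Q n zs j) \<le> card {xs::'x list. set xs \<subseteq> UNIV \<and> length xs = n}"
    by (rule card_mono) (auto simp: level_set_def finite_lists_length)
  also have "\<dots> = card (UNIV::'x set) ^ n" by (rule card_lists_length_eq) simp
  finally have "ln (real (card (level_set Q n zs j))) \<le> ln (real (card (UNIV::'x set) ^ n))"
    using fin False by (simp add: card_gt_0_iff)
  also have "\<dots> = real n * ln (real (card (UNIV::'x set)))" by (simp add: ln_realpow card_gt_0_iff)
  finally have "?T * (1 + ln (real (card (level_set Q n zs j)))) \<le> cover_bound n j"
    unfolding cover_bound_def by (intro mult_left_mono) auto
  then have "real (length L) \<le> cover_bound n j" using L(3) by linarith
  then show ?thesis using L(1,2) by blast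
qed

end

definition level_cover :: "('z, 'x) test_channels \<Rightarrow> nat \<Rightarrow> 'z list \<Rightarrow> nat \<Rightarrow> 'x set list list" where
  "level_cover Q n zs j = (SOME L. set L \<subseteq> indep_seqs Q n zs
     \<and> level_set Q n zs j \<subseteq> (\<Union>Ws\<in>set L. members n Ws) \<and> real (length L) \<le> cover_bound n j)"

definition cover_index :: "('z, 'x) test_channels \<Rightarrow> nat \<Rightarrow> ('x, 'z) vertex \<Rightarrow> nat" where
  "cover_index Q n v = (LEAST k. k < length (level_cover Q n (snd v) (level Q n v))
     \<and> fst v \<in> members n (level_cover Q n (snd v) (level Q n v) ! k))"

definition cover_coloring :: "('z, 'x) test_channels \<Rightarrow> nat \<Rightarrow> 'x list \<Rightarrow> 'z list \<Rightarrow> nat" where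
  "cover_coloring Q n xs zs = prod_encode (level Q n (xs, zs), cover_index Q n (xs, zs))"

context
  fixes Q assumes Q: "admissible_family Q"
begin

lemma level_cover:
  "set (level_cover Q n zs j) \<subseteq> indep_seqs Q n zs"
  "level_set Q n zs j \<subseteq> (\<Union>Ws\<in>set (level_cover Q n zs j). members n Ws)"
  "real (length (level_cover Q n zs j)) \<le> cover_bound n j"
  using someI_ex[OF level_cover_exists[OF Q]] unfolding level_cover_def by blast+

lemma cover_index:
  assumes "v \<in> verts n"
  shows "cover_index Q n v < length (level_cover Q n (snd v) (level Q n v))"
    and "fst v \<in> members n (level_cover Q n (snd v) (level Q n v) ! cover_index Q n v)"
proof -
  let ?L = "level_cover Q n (snd v) (level Q n v)"
  have "fst v \<in> level_set Q n (snd v) (level Q n v)"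
    using assms unfolding level_set_def verts_def by auto
  then obtain Ws where "Ws \<in> set ?L" "fst v \<in> members n Ws" using level_cover(2) by blast
  then have "\<exists>k. k < length ?L \<and> fst v \<in> members n (?L ! k)" by (metis in_set_conv_nth)
  then have "cover_index Q n v < length ?L \<and> fst v \<in> members n (?L ! cover_index Q n v)"
    unfolding cover_index_def by (rule LeastI_ex)
  then show "cover_index Q n v < length ?L" "fst v \<in> members n (?L ! cover_index Q n v)"
    by blast+
qed

lemma cover_coloring_Sn: "Sn_coloring P f g n (cover_coloring Q n)"
  unfolding Sn_coloring_def
proof (intro ballI impI notI)
  fix v w assume v: "v \<in> verts n" and w: "w \<in> verts n" and adj: "char_adj P f g n v w"
    and same: "(seq_type (snd v), cover_coloring Q n (fst v) (snd v))
             = (seq_type (snd w), cover_coloring Q n (fst w) (snd w))"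
  have zs: "snd w = snd v" using adj Gz_adj_of_char_adj[of n "fst v" "snd v" "fst w" "snd w"] by simp
  have "level Q n w = level Q n v" "cover_index Q n w = cover_index Q n v"
    using same unfolding cover_coloring_def by (simp_all add: prod_encode_eq)
  then have "fst w \<in> members n (level_cover Q n (snd v) (level Q n v) ! cover_index Q n v)"
    using cover_index(2)[OF w] zs by simp
  moreover have "level_cover Q n (snd v) (level Q n v) ! cover_index Q n v \<in> indep_seqs Q n (snd v)"
    using level_cover(1) cover_index(1)[OF v] by (meson nth_mem subsetD)
  ultimately have "\<not> char_adj P f g n (fst v, snd v) (fst w, snd v)"
    using members_indep_seq_not_adj[OF _ cover_index(2)[OF v] _ Q] by blast
  moreover have "w = (fst w, snd v)" using zs by (cases w) simp
  ultimately show False using adj by simp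
qed

end

text \<open>A color of \<open>cover_coloring\<close> is determined by the type of \<open>z\<^sup>n\<close>, the level \<open>j\<close> and an index
  below \<open>cover_count n j\<close>. The weights \<open>level_weight\<close> of these descriptions sum to at most 1, the
  factor \<open>1 / ((j + 1) (j + 2))\<close> paying for the unbounded level; so the color entropy exceeds
  the expected self-information by \<open>O(log n)\<close> only.\<close>

definition num_types :: "nat \<Rightarrow> nat" where
  "num_types n = card (seq_type ` {zs::'z list. length zs = n})"

definition cover_count :: "nat \<Rightarrow> nat \<Rightarrow> nat" where
  "cover_count n j = nat \<lfloor>cover_bound n j\<rfloor>"

definition level_weight :: "nat \<Rightarrow> nat \<Rightarrow> real" where
  "level_weight n j = 1 / (real (j + 1) * real (j + 2)) / real (num_types n) / real (cover_count n j)"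

definition code_overhead :: "('z, 'x) test_channels \<Rightarrow> nat \<Rightarrow> real" where
  "code_overhead Q n = 1 + log 2 (1 + real n * ln (real (card (UNIV::'x set))))
     + 2 * log 2 (real n * self_info_bound Q + 2) + real (card (UNIV::'z set)) * log 2 (real n + 1)"

lemma cover_count_pos: "cover_count n j > 0"
  unfolding cover_count_def using cover_bound_ge_2[of n j] by linarith

lemma num_types_pos: "num_types n > 0"
proof -
  have "replicate n undefined \<in> {zs::'z list. length zs = n}" by simp
  then have "seq_type ` {zs::'z list. length zs = n} \<noteq> {}" by blast
  then show ?thesis unfolding num_types_def by (simp add: card_gt_0_iff finite_lists_length)
qed

lemma level_weight_pos: "level_weight n j > 0"
  unfolding level_weight_def using cover_count_pos num_types_pos by simp

lemma sum_level_weight: "(\<Sum>j\<le>J. \<Sum>k<cover_count n j. level_weight n j) \<le> 1 / real (num_types n)"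
proof -
  have "(\<Sum>k<cover_count n j. level_weight n j) = 1 / (real (j + 1) * real (j + 2)) / real (num_types n)" for j
    using cover_count_pos[of n j] unfolding level_weight_def by simp
  then have "(\<Sum>j\<le>J. \<Sum>k<cover_count n j. level_weight n j)
      = (\<Sum>j\<le>J. 1 / (real (j + 1) * real (j + 2))) / real (num_types n)"
    by (simp add: sum_divide_distrib)
  also have "\<dots> \<le> 1 / real (num_types n)"
    unfolding sum_inverse_consecutive_products using num_types_pos[of n] by (simp add: divide_right_mono)
  finally show ?thesis .
qed

lemma log_cover_count_le: "log 2 (real (cover_count n j)) \<le> real (j + 1) + log 2 (1 + real n * ln (real (card (UNIV::'x set))))"
proof -
  have A: "1 + real n * ln (real (card (UNIV::'x set))) > 0"
    by (intro add_pos_nonneg mult_nonneg_nonneg) (auto simp: card_gt_0_iff Suc_le_eq)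
  have "log 2 (real (cover_count n j)) \<le> log 2 (cover_bound n j)"
    using cover_count_pos[of n j] cover_bound_ge_2[of n j] unfolding cover_count_def by simp
  also have "\<dots> = real (j + 1) + log 2 (1 + real n * ln (real (card (UNIV::'x set))))"
    unfolding cover_bound_def using A by (simp add: log_mult_pos log_nat_power)
  finally show ?thesis .
qed

lemma log_num_types_le: "log 2 (real (num_types n)) \<le> real (card (UNIV::'z set)) * log 2 (real n + 1)"
proof -
  have "real (num_types n) \<le> real ((n + 1) ^ card (UNIV::'z set))"
    unfolding num_types_def of_nat_le_iff by (rule card_seq_type_image_le)
  then have "log 2 (real (num_types n)) \<le> log 2 (real ((n + 1) ^ card (UNIV::'z set)))"
    using num_types_pos[of n] by simp
  also have "\<dots> = real (card (UNIV::'z set)) * log 2 (real n + 1)"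
    by (simp add: log_nat_power add.commute)
  finally show ?thesis .
qed

lemma log_level_factor_le:
  assumes "real j \<le> B"
  shows "log 2 (real (j + 1) * real (j + 2)) \<le> 2 * log 2 (B + 2)"
proof -
  have "real (j + 1) * real (j + 2) \<le> (B + 2) * (B + 2)" using assms by (intro mult_mono) auto
  then have "log 2 (real (j + 1) * real (j + 2)) \<le> log 2 ((B + 2) * (B + 2))"
    by (intro log_mono) auto
  also have "\<dots> = 2 * log 2 (B + 2)" using assms by (simp add: log_mult_pos)
  finally show ?thesis .
qed

context
  fixes Q assumes Q: "admissible_family Q"
begin

lemma cover_index_lt_cover_count: "v \<in> verts n \<Longrightarrow> cover_index Q n v < cover_count n (level Q n v)"
  using cover_index(1)[OF Q] level_cover(3)[OF Q, of n "snd v" "level Q n v"]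
  unfolding cover_count_def by (meson le_nat_floor order_less_le_trans)

lemma level_le_self_info_bound: "real (level Q n v) \<le> real n * self_info_bound Q"
  using level_le_self_info[OF Q] self_info_le[OF Q] by (meson order_trans)

lemma sum_level_weight_cover_colors:
  "(\<Sum>col\<in>Sn_color (cover_coloring Q n) ` verts n. level_weight n (fst (prod_decode (snd col)))) \<le> 1"
proof -
  let ?J = "nat \<lfloor>real n * self_info_bound Q\<rfloor>"
  let ?Types = "seq_type ` {zs::'z list. length zs = n}"
  let ?Codes = "prod_encode ` (SIGMA j:{..?J}. {..<cover_count n j})"
  have sub: "Sn_color (cover_coloring Q n) ` verts n \<subseteq> ?Types \<times> ?Codes"
  proof
    fix col assume "col \<in> Sn_color (cover_coloring Q n) ` verts n"
    then obtain v where v: "v \<in> verts n" "col = Sn_color (cover_coloring Q n) v" by blast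
    have "level Q n v \<le> ?J" using level_le_self_info_bound[of n v] by linarith
    then show "col \<in> ?Types \<times> ?Codes"
      using v cover_index_lt_cover_count[OF v(1)]
      by (cases v) (auto simp: Sn_color_def cover_coloring_def verts_def)
  qed
  have "(\<Sum>col\<in>Sn_color (cover_coloring Q n) ` verts n. level_weight n (fst (prod_decode (snd col))))
      \<le> (\<Sum>col\<in>?Types \<times> ?Codes. level_weight n (fst (prod_decode (snd col))))"
    by (rule sum_mono2[OF _ sub]) (auto simp: finite_lists_length less_imp_le level_weight_pos)
  also have "\<dots> = (\<Sum>T\<in>?Types. \<Sum>m\<in>?Codes. level_weight n (fst (prod_decode m)))"
    by (simp add: sum.cartesian_product')
  also have "\<dots> = real (num_types n) * (\<Sum>m\<in>?Codes. level_weight n (fst (prod_decode m)))"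
    by (simp add: num_types_def)
  also have "(\<Sum>m\<in>?Codes. level_weight n (fst (prod_decode m)))
      = (\<Sum>p\<in>(SIGMA j:{..?J}. {..<cover_count n j}). level_weight n (fst p))"
    by (subst sum.reindex) (auto simp: inj_on_def prod_encode_eq)
  also have "\<dots> = (\<Sum>j\<le>?J. \<Sum>k<cover_count n j. level_weight n j)"
    by (subst sum.Sigma) (simp_all add: case_prod_unfold)
  also have "real (num_types n) * \<dots> \<le> real (num_types n) * (1 / real (num_types n))"
    by (intro mult_left_mono sum_level_weight) simp
  also have "\<dots> = 1" using num_types_pos[of n] by simp
  finally show ?thesis .
qed

lemma neg_log_level_weight_le:
  assumes "v \<in> verts n"
  shows "- log 2 (level_weight n (level Q n v)) \<le> self_info Q n v + code_overhead Q n"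
proof -
  let ?j = "level Q n v"
  have "- log 2 (level_weight n ?j)
      = log 2 (real (?j + 1) * real (?j + 2)) + log 2 (real (cover_count n ?j)) + log 2 (real (num_types n))"
    unfolding level_weight_def using cover_count_pos[of n ?j] num_types_pos[of n]
    by (simp add: log_mult_pos log_divide_pos del: of_nat_add)
  also have "\<dots> \<le> 2 * log 2 (real n * self_info_bound Q + 2)
      + (real (?j + 1) + log 2 (1 + real n * ln (real (card (UNIV::'x set)))))
      + real (card (UNIV::'z set)) * log 2 (real n + 1)"
    by (intro add_mono log_level_factor_le level_le_self_info_bound log_cover_count_le log_num_types_le)
  finally show ?thesis
    unfolding code_overhead_def using level_le_self_info[OF Q, of n v] by simp
qed

lemma coloring_entropy_cover_coloring_le:
  "coloring_entropy P g n (cover_coloring Q n) \<le> (\<Sum>v\<in>verts n. vprob v * self_info Q n v) + code_overhead Q n"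
proof -
  let ?c = "Sn_color (cover_coloring Q n)"
  let ?w = "\<lambda>col. level_weight n (fst (prod_decode (snd col)))"
  have dec: "fst (prod_decode (snd (?c v))) = level Q n v" for v
    by (simp add: Sn_color_def cover_coloring_def)
  have cross: "(\<Sum>v\<in>verts n. vprob v * - log 2 (level_weight n (level Q n v)))
      = (\<Sum>col\<in>?c ` verts n. color_prob n ?c col * - log 2 (?w col))"
    by (simp only: sum_color_prob_times dec)
  have "0 \<le> (\<Sum>col\<in>?c ` verts n. color_prob n ?c col * log 2 (color_prob n ?c col / ?w col))"
    using sum_level_weight_cover_colors sum_color_prob[where c="?c" and n=n]
    by (intro gibbs_inequality) (auto simp: finite_verts level_weight_pos color_prob_pos)
  also have "\<dots> = (\<Sum>col\<in>?c ` verts n. color_prob n ?c col * log 2 (color_prob n ?c col))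
      - (\<Sum>col\<in>?c ` verts n. color_prob n ?c col * log 2 (?w col))"
    unfolding sum_subtractf[symmetric]
    by (intro sum.cong refl) (auto simp: log_divide_pos level_weight_pos color_prob_pos right_diff_distrib)
  finally have "coloring_entropy P g n (cover_coloring Q n)
      \<le> (\<Sum>v\<in>verts n. vprob v * - log 2 (level_weight n (level Q n v)))"
    unfolding coloring_entropy_eq entropy_of_def cross by (simp add: sum_negf)
  also have "\<dots> \<le> (\<Sum>v\<in>verts n. vprob v * (self_info Q n v + code_overhead Q n))"
    by (intro sum_mono mult_left_mono neg_log_level_weight_le) (auto simp: vprob_nonneg)
  also have "\<dots> = (\<Sum>v\<in>verts n. vprob v * self_info Q n v) + code_overhead Q n"
    by (simp add: distrib_left sum.distrib sum_distrib_right[symmetric] sum_vprob)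
  finally show ?thesis .
qed

lemma expected_self_info:
  "(\<Sum>v\<in>verts n. vprob v * self_info Q n v)
    = real n * (\<Sum>z\<in>UNIV. PgY P g z * (\<Sum>x\<in>UNIV. Gz_dist P g z x * - log 2 (hit_prob Q z x)))"
proof -
  have "(\<Sum>v\<in>verts n. vprob v * self_info Q n v)
      = (\<Sum>t<n. \<Sum>v\<in>verts n. vprob v * - log 2 (hit_prob Q (snd v!t) (fst v!t)))"
    unfolding self_info_def by (simp add: sum_distrib_left sum.swap[of _ "{..<n}"])
  also have "\<dots> = (\<Sum>t<n. \<Sum>z\<in>UNIV. \<Sum>x\<in>UNIV. pxz x z * - log 2 (hit_prob Q z x))"
    by (intro sum.cong refl sum_vprob_times_coordinate_function) simp
  also have "\<dots> = real n * (\<Sum>z\<in>UNIV. PgY P g z * (\<Sum>x\<in>UNIV. Gz_dist P g z x * - log 2 (hit_prob Q z x)))"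
    using PgY_pos by (simp add: Gz_dist_eq sum_distrib_left less_imp_neq[symmetric])
  finally show ?thesis .
qed

lemma self_info_bound_nonneg: "self_info_bound Q \<ge> 0"
  unfolding self_info_bound_def using hit_prob_pos[OF Q] hit_prob_le_1[OF Q]
  by (intro sum_nonneg) (simp add: log_le_zero_cancel_iff)

lemma code_overhead_le:
  "code_overhead Q n \<le> (1 + log 2 (1 + ln (real (card (UNIV::'x set)))) + 2 * log 2 (2 + self_info_bound Q))
     + (3 + real (card (UNIV::'z set))) * log 2 (real n + 1)"
proof -
  have "ln (real (card (UNIV::'x set))) \<ge> 0" by (simp add: card_gt_0_iff Suc_le_eq)
  then have "log 2 (1 + real n * ln (real (card (UNIV::'x set))))
      \<le> log 2 (1 + ln (real (card (UNIV::'x set)))) + log 2 (real n + 1)"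
    by (rule log_affine_le) simp
  moreover have "log 2 (2 + real n * self_info_bound Q) \<le> log 2 (2 + self_info_bound Q) + log 2 (real n + 1)"
    using self_info_bound_nonneg by (rule log_affine_le) simp
  ultimately show ?thesis unfolding code_overhead_def by (simp add: algebra_simps)
qed

lemma cover_coloring_entropy_le:
  assumes "\<And>z. mutual_info (Gz_dist P g z) (Q z) \<le> korner_entropy (Gz_adj P f g z) (Gz_dist P g z) + \<epsilon>"
  shows "coloring_entropy P g n (cover_coloring Q n) \<le> real n * (korner_rate + \<epsilon>) + code_overhead Q n"
proof -
  have "(\<Sum>z\<in>UNIV. PgY P g z * (\<Sum>x\<in>UNIV. Gz_dist P g z x * - log 2 (hit_prob Q z x)))
      \<le> (\<Sum>z\<in>UNIV. PgY P g z * (korner_entropy (Gz_adj P f g z) (Gz_dist P g z) + \<epsilon>))"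
    using expected_neg_log_hit_prob_le[OF Q] assms PgY_pos
    by (intro sum_mono mult_left_mono) (auto intro: order_trans less_imp_le)
  also have "\<dots> = korner_rate + \<epsilon>"
    by (simp add: korner_rate_def distrib_left sum.distrib sum_distrib_right[symmetric] sum_PgY)
  finally have "(\<Sum>v\<in>verts n. vprob v * self_info Q n v) \<le> real n * (korner_rate + \<epsilon>)"
    unfolding expected_self_info by (rule mult_left_mono) simp
  then show ?thesis using coloring_entropy_cover_coloring_le[of n] by linarith
qed

end

lemma near_optimal_family:
  assumes "\<epsilon> > 0"
  obtains Q where "admissible_family Q"
    "\<And>z. mutual_info (Gz_dist P g z) (Q z) \<le> korner_entropy (Gz_adj P f g z) (Gz_dist P g z) + \<epsilon>"
proof -
  have "\<exists>Qz. admissible_cond (Gz_adj P f g z) Qz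
      \<and> mutual_info (Gz_dist P g z) Qz \<le> korner_entropy (Gz_adj P f g z) (Gz_dist P g z) + \<epsilon>" for z
  proof -
    obtain Qz where "admissible_cond (Gz_adj P f g z) Qz"
      "mutual_info (Gz_dist P g z) Qz < korner_entropy (Gz_adj P f g z) (Gz_dist P g z) + \<epsilon>"
      using korner_entropy_approx[of "Gz_adj P f g z", OF Gz_adj_irrefl assms] .
    then show ?thesis by (intro exI[of _ Qz]) simp
  qed
  then obtain Q where "\<forall>z. admissible_cond (Gz_adj P f g z) (Q z)
      \<and> mutual_info (Gz_dist P g z) (Q z) \<le> korner_entropy (Gz_adj P f g z) (Gz_dist P g z) + \<epsilon>"
    using choice[of "\<lambda>z Qz. admissible_cond (Gz_adj P f g z) Qz
      \<and> mutual_info (Gz_dist P g z) Qz \<le> korner_entropy (Gz_adj P f g z) (Gz_dist P g z) + \<epsilon>"] by blast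
  then show ?thesis using that unfolding admissible_family_def by blast
qed

lemma Inf_coloring_entropy_bounds:
  assumes "admissible_family Q"
  shows "real n * korner_rate \<le> Inf {coloring_entropy P g n ct | ct. Sn_coloring P f g n ct}"
    and "Inf {coloring_entropy P g n ct | ct. Sn_coloring P f g n ct} \<le> coloring_entropy P g n (cover_coloring Q n)"
proof -
  let ?S = "{coloring_entropy P g n ct | ct. Sn_coloring P f g n ct}"
  have lower: "\<forall>h\<in>?S. real n * korner_rate \<le> h" using coloring_entropy_ge_korner_rate by blast
  have upper: "coloring_entropy P g n (cover_coloring Q n) \<in> ?S" using cover_coloring_Sn[OF assms] by blast
  show "real n * korner_rate \<le> Inf ?S" using lower upper by (intro cInf_greatest) auto
  show "Inf ?S \<le> coloring_entropy P g n (cover_coloring Q n)"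
    using lower upper by (intro cInf_lower bdd_belowI[of _ "real n * korner_rate"]) auto
qed

theorem Inf_coloring_entropy_asymptotics:
  "(\<lambda>n. Inf {coloring_entropy P g n ct | ct. Sn_coloring P f g n ct} - real n * korner_rate) \<in> o(\<lambda>n. real n)"
proof (rule landau_o.smallI)
  fix c :: real assume "c > 0"
  obtain Q where Q: "admissible_family Q"
    and good: "\<And>z. mutual_info (Gz_dist P g z) (Q z) \<le> korner_entropy (Gz_adj P f g z) (Gz_dist P g z) + c / 2"
    using near_optimal_family[of "c / 2"] \<open>c > 0\<close> by auto
  define C0 where "C0 = 1 + log 2 (1 + ln (real (card (UNIV::'x set)))) + 2 * log 2 (2 + self_info_bound Q)"
  define C1 where "C1 = 3 + real (card (UNIV::'z set))"
  have "C1 > 0" unfolding C1_def by simp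
  have "eventually (\<lambda>n::nat. C0 \<le> c / 4 * real n \<and> log 2 (real n + 1) \<le> c / 4 / C1 * real n) sequentially"
    using eventually_const_le_linear[of "c / 4" C0] eventually_log_le_linear[of "c / 4 / C1"]
      \<open>c > 0\<close> \<open>C1 > 0\<close> by (auto intro: eventually_conj)
  then show "eventually (\<lambda>n. norm (Inf {coloring_entropy P g n ct | ct. Sn_coloring P f g n ct}
      - real n * korner_rate) \<le> c * norm (real n)) at_top"
  proof (rule eventually_mono)
    fix n :: nat assume n: "C0 \<le> c / 4 * real n \<and> log 2 (real n + 1) \<le> c / 4 / C1 * real n"
    let ?S = "{coloring_entropy P g n ct | ct. Sn_coloring P f g n ct}"
    have "Inf ?S \<le> coloring_entropy P g n (cover_coloring Q n)"
      by (rule Inf_coloring_entropy_bounds(2)[OF Q])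
    also have "\<dots> \<le> real n * korner_rate + c / 2 * real n + code_overhead Q n"
      using cover_coloring_entropy_le[OF Q good, of n] by (simp add: distrib_left mult.commute)
    also have "code_overhead Q n \<le> C0 + C1 * log 2 (real n + 1)"
      using code_overhead_le[OF Q, of n] unfolding C0_def C1_def .
    also have "C1 * log 2 (real n + 1) \<le> c / 4 * real n"
      using n \<open>C1 > 0\<close> by (simp add: field_simps)
    finally have "Inf ?S - real n * korner_rate \<le> c * real n" using n by linarith
    then show "norm (Inf ?S - real n * korner_rate) \<le> c * norm (real n)"
      using Inf_coloring_entropy_bounds(1)[OF Q, of n] by simp
  qed
qed

end

theorem lemma3:
  fixes P :: "'x::finite \<Rightarrow> 'y::finite \<Rightarrow> real"
    and f :: "'x \<Rightarrow> 'y \<Rightarrow> 'u::finite"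
    and g :: "'y \<Rightarrow> 'z::finite"
  assumes "is_joint_pmf P"
    and "\<forall>x. (\<Sum>y\<in>UNIV. P x y) > 0"
    and "\<forall>y. (\<Sum>x\<in>UNIV. P x y) > 0"
    and "\<forall>z x x'. \<exists>y. g y = z \<and> P x y * P x' y > 0"
  shows "(\<lambda>n. Inf {coloring_entropy P g n ct | ct. Sn_coloring P f g n ct}
            - real n * (\<Sum>z\<in>UNIV. PgY P g z * korner_entropy (Gz_adj P f g z) (Gz_dist P g z)))
         \<in> o(\<lambda>n. real n)"
proof -
  interpret char_graph P f g
    using assms(1,4) by unfold_locales blast+
  show ?thesis using Inf_coloring_entropy_asymptotics unfolding korner_rate_def .
qed

end
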